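(* Let $g$ be an absolutely continuous distortion function whose weight $\gamma$ satisfies $\int_0^1\gamma^2<\infty$. Assume $\inf\{\lambda\ge0:k^\uparrow_\lambda\text{ not constant}\}=0$, and let $\lambda>0$. Then the problem $$\sup_{h\in\mathcal M^{-1}(\mu,\sigma)}\int_0^1\big(\gamma(u)+\lambda F^{-1}(u)\big)h(u)\,du$$ has the unique solution $$h^\uparrow_\lambda(u)=\mu+\sigma\,\frac{k^\uparrow_\lambda(u)-a_\lambda}{b_\lambda},$$ where $a_\lambda=\mathbb E(k^\uparrow_\lambda(U))$ and $b_\lambda=\operatorname{std}(k^\uparrow_\lambda(U))>0$. Moreover, $\lambda\mapsto\operatorname{corr}(F^{-1}(U),h^\uparrow_\lambda(U))$ is continuous on $(0,\infty)$.
   Context: $U\sim\mathcal U(0,1)$. A distortion function is a non-decreasing $g:[0,1]\to[0,1]$ with $g(0)=0$, $g(1)=1$; its weight is $\gamma(u)=\partial_-g(x)|_{x=1-u}$. $F$ is a distribution function with finite second moment and quantile function $F^{-1}(u)=\inf\{y:F(y)\ge u\}$. $\mathcal M^{-1}(\mu,\sigma)$ is the set of quantile functions of distributions on $\mathbb R$ with mean $\mu\in\mathbb R$ and variance $\sigma^2>0$. $\mathcal K$ is the set of square-integrable, non-decreasing, left-continuous functions $(0,1)\to\mathbb R$, and $$k^\uparrow_\lambda=\arg\min_{k\in\mathcal K}\|\gamma+\lambda F^{-1}-k\|^2_{L^2(0,1)}.$$ *)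

theory Defs
  imports "HOL-Probability.Probability"
begin

definition distortion :: "(real \<Rightarrow> real) \<Rightarrow> bool" where
  "distortion g \<longleftrightarrow> mono_on {0..1} g \<and> g ` {0..1} \<subseteq> {0..1} \<and> g 0 = 0 \<and> g 1 = 1"

definition abs_cont_01 :: "(real \<Rightarrow> real) \<Rightarrow> bool" where
  "abs_cont_01 g \<longleftrightarrow> (\<forall>e>0. \<exists>d>0. \<forall>(n::nat) (a::nat \<Rightarrow> real) b.
     (\<forall>i<n. 0 \<le> a i \<and> a i \<le> b i \<and> b i \<le> 1) \<and>
     (\<forall>i<n. \<forall>j<n. i \<noteq> j \<longrightarrow> b i \<le> a j \<or> b j \<le> a i) \<and>
     (\<Sum>i<n. b i - a i) < d \<longrightarrow> (\<Sum>i<n. \<bar>g (b i) - g (a i)\<bar>) < e)"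

definition left_deriv :: "(real \<Rightarrow> real) \<Rightarrow> real \<Rightarrow> real" where
  "left_deriv g x = Lim (at_left x) (\<lambda>y. (g x - g y) / (x - y))"

definition weight :: "(real \<Rightarrow> real) \<Rightarrow> real \<Rightarrow> real" where
  "weight g u = left_deriv g (1 - u)"

definition quantile :: "(real \<Rightarrow> real) \<Rightarrow> real \<Rightarrow> real" where
  "quantile F u = Inf {y. F y \<ge> u}"

definition sq_int01 :: "(real \<Rightarrow> real) \<Rightarrow> bool" where
  "sq_int01 f \<longleftrightarrow> f \<in> borel_measurable lborel \<and> set_integrable lborel {0<..<1} (\<lambda>u. (f u)\<^sup>2)"

definition Mq :: "real \<Rightarrow> real \<Rightarrow> (real \<Rightarrow> real) set" where
  "Mq \<mu> \<sigma> = {h. \<exists>N. real_distribution N \<and> integrable N (\<lambda>x. x\<^sup>2) \<and>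
      prob_space.expectation N (\<lambda>x. x) = \<mu> \<and> prob_space.variance N (\<lambda>x. x) = \<sigma>\<^sup>2 \<and>
      (\<forall>u\<in>{0<..<1}. h u = quantile (cdf N) u)}"

definition Kcone :: "(real \<Rightarrow> real) set" where
  "Kcone = {k. sq_int01 k \<and> mono_on {0<..<1} k \<and> (\<forall>u\<in>{0<..<1}. continuous (at_left u) k)}"

definition L2dist2 :: "(real \<Rightarrow> real) \<Rightarrow> (real \<Rightarrow> real) \<Rightarrow> real" where
  "L2dist2 f k = (LINT u:{0<..<1}|lborel. (f u - k u)\<^sup>2)"

definition kup :: "(real \<Rightarrow> real) \<Rightarrow> (real \<Rightarrow> real) \<Rightarrow> real \<Rightarrow> real \<Rightarrow> real" where
  "kup \<gamma> Q lam = (SOME k. k \<in> Kcone \<and> (\<forall>u. u \<notin> {0<..<1} \<longrightarrow> k u = 0) \<and>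
       (\<forall>k'\<in>Kcone. L2dist2 (\<lambda>u. \<gamma> u + lam * Q u) k \<le> L2dist2 (\<lambda>u. \<gamma> u + lam * Q u) k'))"

(* E f(U), std f(U), corr(f(U), h(U)) for U uniform on (0,1) *)
definition EU :: "(real \<Rightarrow> real) \<Rightarrow> real" where
  "EU f = (LINT u:{0<..<1}|lborel. f u)"

definition stdU :: "(real \<Rightarrow> real) \<Rightarrow> real" where
  "stdU f = sqrt (LINT u:{0<..<1}|lborel. (f u - EU f)\<^sup>2)"

definition corrU :: "(real \<Rightarrow> real) \<Rightarrow> (real \<Rightarrow> real) \<Rightarrow> real" where
  "corrU f h = (EU (\<lambda>u. f u * h u) - EU f * EU h) / (stdU f * stdU h)"

definition obj :: "(real \<Rightarrow> real) \<Rightarrow> (real \<Rightarrow> real) \<Rightarrow> real" where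
  "obj w h = (LINT u:{0<..<1}|lborel. w u * h u)"

end

theory Submission
  imports Defs
begin

text \<open>The constraint set \<open>Mq \<mu> \<sigma>\<close> consists exactly of
  the elements of the cone \<open>K\<close> of non-decreasing left-continuous functions with mean \<open>\<mu>\<close> and
  standard deviation \<open>\<sigma>\<close>. Writing \<open>w = \<gamma> + \<lambda> Q\<close> and \<open>k\<close> for its projection onto \<open>K\<close>, the
  variational inequality gives \<open>\<langle>w - k, h\<rangle> \<le> 0\<close> on \<open>K\<close> with equality at \<open>h = k\<close>, so
  \<open>\<langle>w, h\<rangle> \<le> \<langle>k - E k, h - \<mu>\<rangle> + \<mu> E k\<close>; by Cauchy--Schwarz this is maximised exactly by the
  standardisation of \<open>k\<close>, provided \<open>k\<close> is not constant. Non-constancy for \<open>\<lambda> > 0\<close> comes from a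
  Chebyshev-type inequality: if the projection is constant for some \<open>\<lambda>\<close>, it is constant for
  every smaller \<open>\<lambda>\<close>, so the infimum assumption rules this out. Existence
  of the projection uses Helly's selection theorem and Fatou's lemma, and continuity of the
  correlation follows from the projection being 1-Lipschitz.\<close>

section \<open>The uniform distribution on (0,1) and the space L2(0,1)\<close>

definition U01 :: "real measure" where
  "U01 = restrict_space lborel {0<..<1}"

lemma space_U01 [simp]: "space U01 = {0<..<1}"
  by (simp add: U01_def space_restrict_space)

lemma sets_U01_iff: "A \<in> sets U01 \<longleftrightarrow> A \<subseteq> {0<..<1} \<and> A \<in> sets borel"
  unfolding U01_def by (subst sets_restrict_space_iff) auto

lemma prob_space_U01: "prob_space U01"
  unfolding U01_def
  by (auto simp add: emeasure_restrict_space space_restrict_space intro!: prob_spaceI)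

interpretation U01: prob_space U01
  by (rule prob_space_U01)

lemma emeasure_U01: "A \<subseteq> {0<..<1} \<Longrightarrow> A \<in> sets borel \<Longrightarrow> emeasure U01 A = emeasure lborel A"
  unfolding U01_def by (rule emeasure_restrict_space) auto

lemma measure_U01: "A \<subseteq> {0<..<1} \<Longrightarrow> A \<in> sets borel \<Longrightarrow> measure U01 A = measure lborel A"
  unfolding U01_def by (rule measure_restrict_space) auto

lemma set_lebesgue_integral_U01:
  fixes f :: "real \<Rightarrow> real"
  shows "(LINT u:{0<..<1}|lborel. f u) = integral\<^sup>L U01 f"
  unfolding U01_def set_lebesgue_integral_def
  by (rule integral_restrict_space[symmetric]) auto

lemma set_integrable_U01:
  fixes f :: "real \<Rightarrow> real"
  shows "set_integrable lborel {0<..<1} f \<longleftrightarrow> integrable U01 f"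
  unfolding U01_def by (rule set_integrable_eq) auto

lemma borel_measurable_U01:
  "borel_measurable U01 = borel_measurable (restrict_space borel {0<..<1::real})"
  unfolding U01_def by (rule measurable_cong_sets[OF sets_restrict_space_cong[OF sets_lborel] refl])

lemma borel_measurable_U01_iff:
  fixes f :: "real \<Rightarrow> real"
  shows "f \<in> borel_measurable U01 \<longleftrightarrow> (\<lambda>x. indicator {0<..<1} x *\<^sub>R f x) \<in> borel_measurable lborel"
  unfolding U01_def by (rule borel_measurable_restrict_space_iff) auto

lemma borel_measurable_U01I: "f \<in> borel_measurable lborel \<Longrightarrow> f \<in> borel_measurable U01"
  unfolding U01_def by (rule measurable_restrict_space1)

lemma AE_U01_countable:
  assumes "countable A" "\<And>u. u \<in> {0<..<1} \<Longrightarrow> u \<notin> A \<Longrightarrow> P u"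
  shows "AE u in U01. P u"
proof -
  have "AE u in lborel. u \<in> {0<..<1} \<longrightarrow> P u"
    by (rule AE_I'[OF countable_imp_null_set_lborel[OF assms(1)]]) (use assms(2) in auto)
  then show ?thesis
    unfolding U01_def by (subst AE_restrict_space_iff) auto
qed

lemma measure_U01_space [simp]: "measure U01 {0<..<1} = 1"
  using U01.prob_space by simp

definition L2 :: "(real \<Rightarrow> real) \<Rightarrow> bool" where
  "L2 f \<longleftrightarrow> f \<in> borel_measurable U01 \<and> integrable U01 (\<lambda>u. (f u)\<^sup>2)"

definition ip :: "(real \<Rightarrow> real) \<Rightarrow> (real \<Rightarrow> real) \<Rightarrow> real" where
  "ip f g = integral\<^sup>L U01 (\<lambda>u. f u * g u)"

definition L2norm :: "(real \<Rightarrow> real) \<Rightarrow> real" where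
  "L2norm f = sqrt (ip f f)"

lemma L2D: "L2 f \<Longrightarrow> f \<in> borel_measurable U01" "L2 f \<Longrightarrow> integrable U01 (\<lambda>u. (f u)\<^sup>2)"
  by (simp_all add: L2_def)

lemma L2_integrable_mult:
  assumes "L2 f" "L2 g"
  shows "integrable U01 (\<lambda>u. f u * g u)"
proof (rule Bochner_Integration.integrable_bound)
  show "integrable U01 (\<lambda>u. (f u)\<^sup>2 + (g u)\<^sup>2)"
    using assms by (simp add: L2_def)
  show "(\<lambda>u. f u * g u) \<in> borel_measurable U01"
    using assms by (auto simp: L2_def intro!: borel_measurable_times)
  have "\<bar>f x\<bar> * \<bar>g x\<bar> \<le> (f x)\<^sup>2 + (g x)\<^sup>2" for x
  proof -
    have "\<bar>f x\<bar> * \<bar>g x\<bar> \<le> 2 * \<bar>f x\<bar> * \<bar>g x\<bar>" by (simp add: mult.assoc)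
    also have "\<dots> \<le> \<bar>f x\<bar>\<^sup>2 + \<bar>g x\<bar>\<^sup>2" by (rule sum_squares_bound)
    finally show ?thesis by simp
  qed
  then show "AE x in U01. norm (f x * g x) \<le> norm ((f x)\<^sup>2 + (g x)\<^sup>2)"
    by (simp add: abs_mult)
qed

lemma L2_const [simp]: "L2 (\<lambda>u. c)"
  unfolding L2_def by auto

lemma L2_integrable: "L2 f \<Longrightarrow> integrable U01 f"
  using L2_integrable_mult[of f "\<lambda>u. 1"] by simp

lemma L2_add: "L2 f \<Longrightarrow> L2 g \<Longrightarrow> L2 (\<lambda>u. f u + g u)"
  unfolding L2_def power2_sum using L2_integrable_mult[of f g]
  by (auto simp: L2_def mult.assoc)

lemma L2_scale: "L2 f \<Longrightarrow> L2 (\<lambda>u. c * f u)"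
  unfolding L2_def by (auto simp: power_mult_distrib)

lemma L2_diff: "L2 f \<Longrightarrow> L2 g \<Longrightarrow> L2 (\<lambda>u. f u - g u)"
  using L2_add[of f "\<lambda>u. (-1) * g u"] L2_scale[of g "-1"] by simp

lemma L2_affine: "L2 f \<Longrightarrow> L2 (\<lambda>u. a * f u + b)"
  by (intro L2_add L2_scale L2_const)

lemma L2_cong:
  assumes "L2 f" "\<And>u. u \<in> {0<..<1} \<Longrightarrow> f u = g u"
  shows "L2 g"
proof -
  have "g \<in> borel_measurable U01"
    using assms by (metis L2D(1) measurable_cong space_U01)
  moreover have "integrable U01 (\<lambda>u. (g u)\<^sup>2) \<longleftrightarrow> integrable U01 (\<lambda>u. (f u)\<^sup>2)"
    by (rule Bochner_Integration.integrable_cong) (auto simp: assms(2))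
  ultimately show ?thesis
    using assms(1) by (simp add: L2_def)
qed

lemma integral_U01_affine:
  "L2 f \<Longrightarrow> integral\<^sup>L U01 (\<lambda>u. a * f u + b) = a * integral\<^sup>L U01 f + b"
  by (subst Bochner_Integration.integral_add) (auto intro: L2_integrable)

lemma integral_U01_diff:
  "L2 f \<Longrightarrow> L2 g \<Longrightarrow> integral\<^sup>L U01 (\<lambda>u. f u - g u) = integral\<^sup>L U01 f - integral\<^sup>L U01 g"
  by (intro Bochner_Integration.integral_diff L2_integrable)

lemma ip_cong:
  assumes "\<And>u. u \<in> {0<..<1} \<Longrightarrow> f u = f' u" "\<And>u. u \<in> {0<..<1} \<Longrightarrow> g u = g' u"
  shows "ip f g = ip f' g'"
  unfolding ip_def using assms by (intro Bochner_Integration.integral_cong) auto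

lemma ip_commute: "ip f g = ip g f"
  unfolding ip_def by (simp add: mult.commute)

lemma ip_add_left: "L2 f \<Longrightarrow> L2 g \<Longrightarrow> L2 h \<Longrightarrow> ip (\<lambda>u. f u + g u) h = ip f h + ip g h"
  unfolding ip_def distrib_right
  by (rule Bochner_Integration.integral_add) (auto intro: L2_integrable_mult)

lemma ip_diff_left: "L2 f \<Longrightarrow> L2 g \<Longrightarrow> L2 h \<Longrightarrow> ip (\<lambda>u. f u - g u) h = ip f h - ip g h"
  unfolding ip_def left_diff_distrib
  by (rule Bochner_Integration.integral_diff) (auto intro: L2_integrable_mult)

lemma ip_diff_right: "L2 f \<Longrightarrow> L2 g \<Longrightarrow> L2 h \<Longrightarrow> ip h (\<lambda>u. f u - g u) = ip h f - ip h g"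
  using ip_diff_left[of f g h] by (simp add: ip_commute)

lemma ip_scale_left: "ip (\<lambda>u. c * f u) h = c * ip f h"
  unfolding ip_def by (simp add: mult.assoc)

lemma ip_scale_right: "ip h (\<lambda>u. c * f u) = c * ip h f"
  using ip_scale_left by (simp add: ip_commute)

lemma ip_const_left: "ip (\<lambda>u. c) f = c * integral\<^sup>L U01 f"
  unfolding ip_def by simp

lemma ip_const_right: "ip f (\<lambda>u. c) = c * integral\<^sup>L U01 f"
  unfolding ip_def by simp

lemma ip_affine_left:
  assumes "L2 f" "L2 g"
  shows "ip (\<lambda>u. a * f u + b) g = a * ip f g + b * integral\<^sup>L U01 g"
  using assms by (simp add: ip_add_left L2_scale ip_scale_left ip_const_left)

lemma ip_affine_right:
  "L2 f \<Longrightarrow> L2 g \<Longrightarrow> ip g (\<lambda>u. a * f u + b) = a * ip g f + b * integral\<^sup>L U01 g"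
  using ip_affine_left[of f g] by (simp add: ip_commute)

lemma ip_self: "ip f f = integral\<^sup>L U01 (\<lambda>u. (f u)\<^sup>2)"
  unfolding ip_def by (simp add: power2_eq_square)

lemma ip_self_nonneg: "0 \<le> ip f f"
  unfolding ip_def by (rule Bochner_Integration.integral_nonneg) simp

lemma ip_self_eq_0_AE:
  assumes "L2 f" "ip f f = 0"
  shows "AE u in U01. f u = 0"
proof -
  have "AE u in U01. (f u)\<^sup>2 = 0"
    using assms integral_nonneg_eq_0_iff_AE[OF L2D(2)[OF assms(1)]] by (simp add: ip_self)
  then show ?thesis by simp
qed

lemma AE_eq_integral_of_le:
  fixes f :: "real \<Rightarrow> real"
  assumes "integrable U01 f" "\<And>u. u \<in> {0<..<1} \<Longrightarrow> f u \<le> integral\<^sup>L U01 f"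
  shows "AE u in U01. f u = integral\<^sup>L U01 f"
proof -
  let ?g = "\<lambda>u. integral\<^sup>L U01 f - f u"
  have "integrable U01 ?g"
    using assms(1) by simp
  moreover have "AE u in U01. 0 \<le> ?g u"
    using assms(2) by (intro AE_I2) simp
  moreover have "integral\<^sup>L U01 ?g = 0"
    using assms(1) by simp
  ultimately have "AE u in U01. ?g u = 0"
    using integral_nonneg_eq_0_iff_AE by blast
  then show ?thesis by auto
qed

lemma ip_diff_self:
  assumes "L2 f" "L2 g"
  shows "ip (\<lambda>u. f u - t * g u) (\<lambda>u. f u - t * g u) = ip f f - 2 * t * ip f g + t\<^sup>2 * ip g g"
  using assms L2_scale[OF assms(2), of t]
  by (simp add: ip_diff_left ip_diff_right L2_diff ip_scale_left ip_scale_right ip_commute[of g f]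
      power2_eq_square algebra_simps)

lemma ip_shift:
  assumes "L2 f" "L2 g"
  shows "ip (\<lambda>u. f u - a) (\<lambda>u. g u - b)
           = ip f g - b * integral\<^sup>L U01 f - a * integral\<^sup>L U01 g + a * b"
  using assms by (simp add: ip_diff_left ip_diff_right L2_diff ip_const_left ip_const_right
      integral_U01_diff algebra_simps)

lemma L2norm_nonneg: "0 \<le> L2norm f"
  by (simp add: L2norm_def ip_self_nonneg)

lemma L2norm_sq: "(L2norm f)\<^sup>2 = ip f f"
  by (simp add: L2norm_def ip_self_nonneg)

lemma L2norm_scale: "L2norm (\<lambda>u. c * f u) = \<bar>c\<bar> * L2norm f"
proof -
  have "ip (\<lambda>u. c * f u) (\<lambda>u. c * f u) = c\<^sup>2 * ip f f"
    by (simp add: ip_scale_left ip_scale_right power2_eq_square)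
  then show ?thesis by (simp add: L2norm_def real_sqrt_mult)
qed

lemma L2norm_cong: "(\<And>u. u \<in> {0<..<1} \<Longrightarrow> f u = g u) \<Longrightarrow> L2norm f = L2norm g"
  unfolding L2norm_def by (metis ip_cong)

lemma quadratic_nonneg_imp_discriminant:
  fixes A B C :: real
  assumes nonneg: "\<And>t. 0 \<le> A - 2 * t * B + t\<^sup>2 * C"
  shows "B\<^sup>2 \<le> A * C"
proof (cases "C = 0")
  case True
  have "B = 0"
  proof (rule ccontr)
    assume "B \<noteq> 0"
    then have "A - 2 * ((A + 1) / (2 * B)) * B = -1" by (simp add: field_simps)
    then show False using nonneg[of "(A + 1) / (2 * B)"] True by simp
  qed
  then show ?thesis using True by simp
next
  case False
  have even: "0 \<le> A + t\<^sup>2 * C" for t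
    using nonneg[of t] nonneg[of "-t"] by simp
  have "0 \<le> C"
  proof (rule ccontr)
    assume "\<not> 0 \<le> C"
    define t where "t = sqrt ((\<bar>A\<bar> + 1) / - C)"
    have "t\<^sup>2 = (\<bar>A\<bar> + 1) / - C"
      unfolding t_def using \<open>\<not> 0 \<le> C\<close> by (intro real_sqrt_pow2 divide_nonneg_pos) auto
    then have "t\<^sup>2 * C = - (\<bar>A\<bar> + 1)" using \<open>\<not> 0 \<le> C\<close> by (simp add: field_simps)
    then show False using even[of t] by linarith
  qed
  then have C: "0 < C" using False by simp
  have "0 \<le> A - 2 * (B / C) * B + (B / C)\<^sup>2 * C" by (rule nonneg)
  also have "\<dots> = A - B\<^sup>2 / C" using C by (simp add: field_simps power2_eq_square)
  finally show ?thesis using C by (simp add: field_simps)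
qed

lemma ip_Cauchy_Schwarz:
  assumes "L2 f" "L2 g"
  shows "\<bar>ip f g\<bar> \<le> L2norm f * L2norm g"
proof -
  have "(ip f g)\<^sup>2 \<le> ip f f * ip g g"
  proof (rule quadratic_nonneg_imp_discriminant)
    show "0 \<le> ip f f - 2 * t * ip f g + t\<^sup>2 * ip g g" for t
      using ip_diff_self[OF assms, of t] ip_self_nonneg[of "\<lambda>u. f u - t * g u"] by simp
  qed
  then show ?thesis
    unfolding L2norm_def using ip_self_nonneg[of f] ip_self_nonneg[of g]
    by (metis real_sqrt_abs real_sqrt_le_mono real_sqrt_mult)
qed

lemma L2norm_triangle:
  assumes "L2 f" "L2 g"
  shows "L2norm (\<lambda>u. f u + g u) \<le> L2norm f + L2norm g"
proof -
  have sum: "ip (\<lambda>u. f u + g u) (\<lambda>u. f u + g u) = ip f f + 2 * ip f g + ip g g"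
    using ip_diff_self[OF assms, of "-1"] by simp
  have "ip f g \<le> L2norm f * L2norm g"
    using ip_Cauchy_Schwarz[OF assms] by (rule abs_le_D1)
  then have "(L2norm (\<lambda>u. f u + g u))\<^sup>2 \<le> (L2norm f + L2norm g)\<^sup>2"
    unfolding power2_sum L2norm_sq sum by linarith
  then show ?thesis
    by (rule power2_le_imp_le) (simp add: L2norm_nonneg add_nonneg_nonneg)
qed

lemma ip_self_ge_on_set:
  assumes "L2 f" "A \<in> sets U01" "0 \<le> c" "\<And>v. v \<in> A \<Longrightarrow> c \<le> (f v)\<^sup>2"
  shows "c * measure U01 A \<le> ip f f"
proof -
  have "A \<inter> {0<..<1} = A"
    using assms(2) by (auto simp: sets_U01_iff)
  then have "c * measure U01 A = integral\<^sup>L U01 (\<lambda>v. indicator A v * c)"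
    using assms(2) by simp
  also have "\<dots> \<le> integral\<^sup>L U01 (\<lambda>v. (f v)\<^sup>2)"
  proof (rule integral_mono)
    show "integrable U01 (\<lambda>v. indicator A v * c)"
      using assms(2) by (intro integrable_mult_left U01.integrable_const_bound[where B=1]) auto
    show "integrable U01 (\<lambda>v. (f v)\<^sup>2)"
      using assms(1) by (rule L2D)
    show "indicator A v * c \<le> (f v)\<^sup>2" for v
      using assms(3,4) by (cases "v \<in> A") auto
  qed
  finally show ?thesis by (simp add: ip_self)
qed

section \<open>The cone of non-decreasing left-continuous functions\<close>

definition in_K :: "(real \<Rightarrow> real) \<Rightarrow> bool" where
  "in_K f \<longleftrightarrow> L2 f \<and> mono_on {0<..<1} f \<and> (\<forall>u\<in>{0<..<1}. continuous (at_left u) f)"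

lemma in_KD:
  assumes "in_K f"
  shows "L2 f" "mono_on {0<..<1} f" "\<And>u. u \<in> {0<..<1} \<Longrightarrow> continuous (at_left u) f"
  using assms by (simp_all add: in_K_def)

lemma in_K_const [simp]: "in_K (\<lambda>u. c)"
  by (simp add: in_K_def mono_on_def)

lemma in_K_comb:
  assumes "in_K f" "in_K g" "0 \<le> a" "0 \<le> b"
  shows "in_K (\<lambda>u. a * f u + b * g u + c)"
  unfolding in_K_def
proof (intro conjI ballI)
  show "L2 (\<lambda>u. a * f u + b * g u + c)"
    using assms by (intro L2_add L2_scale L2_const) (auto dest: in_KD)
  show "mono_on {0<..<1} (\<lambda>u. a * f u + b * g u + c)"
  proof (rule mono_onI)
    fix r s :: real assume rs: "r \<in> {0<..<1}" "s \<in> {0<..<1}" "r \<le> s"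
    have "f r \<le> f s" "g r \<le> g s"
      using rs in_KD(2)[OF assms(1)] in_KD(2)[OF assms(2)] by (auto intro: mono_onD)
    then show "a * f r + b * g r + c \<le> a * f s + b * g s + c"
      using assms(3,4) by (intro add_mono mult_left_mono order.refl)
  qed
  show "continuous (at_left u) (\<lambda>u. a * f u + b * g u + c)" if "u \<in> {0<..<1}" for u
    using in_KD(3)[OF assms(1) that] in_KD(3)[OF assms(2) that] by (intro continuous_intros)
qed

lemma in_K_affine: "in_K f \<Longrightarrow> 0 \<le> a \<Longrightarrow> in_K (\<lambda>u. a * f u + b)"
  using in_K_comb[of f f a 0 b] by simp

lemma in_K_cong:
  assumes "in_K f" "\<And>u. u \<in> {0<..<1} \<Longrightarrow> f u = g u"
  shows "in_K g"
  unfolding in_K_def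
proof (intro conjI ballI)
  show "L2 g" using L2_cong in_KD(1)[OF assms(1)] assms(2) by blast
  show "mono_on {0<..<1} g"
    using in_KD(2)[OF assms(1)] assms(2) unfolding mono_on_def by auto
  show "continuous (at_left u) g" if u: "u \<in> {0<..<1}" for u
  proof -
    have "eventually (\<lambda>v. f v = g v) (at_left u)"
      using u by (intro eventually_mono[OF eventually_at_left_real[of 0 u]] assms(2)) auto
    then show ?thesis
      using in_KD(3)[OF assms(1) u] assms(2)[OF u]
      by (simp add: continuous_within tendsto_cong)
  qed
qed

lemma left_continuous_AE_eq:
  fixes f g :: "real \<Rightarrow> real"
  assumes cf: "\<And>u. u \<in> {0<..<1} \<Longrightarrow> continuous (at_left u) f"
    and cg: "\<And>u. u \<in> {0<..<1} \<Longrightarrow> continuous (at_left u) g"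
    and ae: "AE u in U01. f u = g u"
    and u: "u \<in> {0<..<1}"
  shows "f u = g u"
proof (rule ccontr)
  assume ne: "f u \<noteq> g u"
  have "((\<lambda>v. f v - g v) \<longlongrightarrow> f u - g u) (at_left u)"
    using cf[OF u] cg[OF u] by (intro tendsto_diff) (auto simp: continuous_within)
  moreover have "f u - g u \<noteq> 0" using ne by simp
  ultimately have "eventually (\<lambda>v. f v - g v \<noteq> 0) (at_left u)" by (rule tendsto_imp_eventually_ne)
  then obtain b where b: "b < u" "\<And>v. b < v \<Longrightarrow> v < u \<Longrightarrow> f v - g v \<noteq> 0"
    by (auto simp: eventually_at_left_field)
  define b' where "b' = max b 0"
  have b': "0 \<le> b'" "b' < u" "b \<le> b'" using b u by (auto simp: b'_def)
  from ae obtain N where N: "{x \<in> space U01. \<not> f x = g x} \<subseteq> N" "emeasure U01 N = 0" "N \<in> sets U01"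
    by (rule AE_E)
  have sub: "{b'<..<u} \<subseteq> N"
  proof
    fix v assume v: "v \<in> {b'<..<u}"
    then have "f v \<noteq> g v" using b(2)[of v] b' by auto
    then show "v \<in> N" using N(1) v b' u by auto
  qed
  have "emeasure U01 {b'<..<u} = emeasure lborel {b'<..<u}"
    using b' u by (intro emeasure_U01) auto
  also have "\<dots> = ennreal (u - b')" using b' by simp
  finally have "emeasure U01 {b'<..<u} > 0" using b' by simp
  moreover have "emeasure U01 {b'<..<u} \<le> emeasure U01 N" by (rule emeasure_mono[OF sub N(3)])
  ultimately show False using N(2) by simp
qed

lemma in_K_AE_eq:
  "in_K f \<Longrightarrow> in_K g \<Longrightarrow> AE u in U01. f u = g u \<Longrightarrow> u \<in> {0<..<1} \<Longrightarrow> f u = g u"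
  by (rule left_continuous_AE_eq) (auto dest: in_KD)

lemma in_K_sq_bound:
  assumes "in_K k" and u: "u \<in> {0<..<1}"
  shows "(k u)\<^sup>2 * min u (1 - u) \<le> ip k k"
proof (cases "0 \<le> k u")
  case True
  have "(k u)\<^sup>2 * measure U01 {u..<1} \<le> ip k k"
  proof (rule ip_self_ge_on_set[OF in_KD(1)[OF assms(1)]])
    fix v assume "v \<in> {u..<1}"
    then have "k u \<le> k v" using u by (intro mono_onD[OF in_KD(2)[OF assms(1)]]) auto
    then show "(k u)\<^sup>2 \<le> (k v)\<^sup>2" using True by (intro power_mono) auto
  qed (use u in \<open>auto simp: sets_U01_iff\<close>)
  moreover have "measure U01 {u..<1} = 1 - u"
    using u by (subst measure_U01) auto
  moreover have "(k u)\<^sup>2 * min u (1 - u) \<le> (k u)\<^sup>2 * (1 - u)"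
    by (intro mult_left_mono) auto
  ultimately show ?thesis by simp
next
  case False
  have "(k u)\<^sup>2 * measure U01 {0<..u} \<le> ip k k"
  proof (rule ip_self_ge_on_set[OF in_KD(1)[OF assms(1)]])
    fix v assume "v \<in> {0<..u}"
    then have "k v \<le> k u" using u by (intro mono_onD[OF in_KD(2)[OF assms(1)]]) auto
    then have "(- k u)\<^sup>2 \<le> (- k v)\<^sup>2" using False by (intro power_mono) auto
    then show "(k u)\<^sup>2 \<le> (k v)\<^sup>2" by simp
  qed (use u in \<open>auto simp: sets_U01_iff\<close>)
  moreover have "measure U01 {0<..u} = u"
    using u by (subst measure_U01) auto
  moreover have "(k u)\<^sup>2 * min u (1 - u) \<le> (k u)\<^sup>2 * u"
    by (intro mult_left_mono) auto
  ultimately show ?thesis by simp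
qed

lemma in_K_abs_bound:
  assumes K: "in_K k" and u: "u \<in> {0<..<1}" and B: "L2norm k \<le> B"
  shows "\<bar>k u\<bar> \<le> B / sqrt (min u (1 - u))"
proof -
  have m: "0 < min u (1 - u)" using u by simp
  have "(L2norm k)\<^sup>2 \<le> B\<^sup>2"
    using B L2norm_nonneg[of k] by (rule power_mono)
  then have "(k u)\<^sup>2 * min u (1 - u) \<le> B\<^sup>2"
    using in_K_sq_bound[OF K u] unfolding L2norm_sq by linarith
  then have "sqrt ((k u)\<^sup>2 * min u (1 - u)) \<le> sqrt (B\<^sup>2)"
    by (rule real_sqrt_le_mono)
  moreover have "0 \<le> B" using B L2norm_nonneg[of k] by linarith
  ultimately have "\<bar>k u\<bar> * sqrt (min u (1 - u)) \<le> B"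
    by (simp add: real_sqrt_mult)
  then show ?thesis
    using m by (simp add: pos_le_divide_eq)
qed

lemma mono_on_crossing:
  fixes f :: "real \<Rightarrow> real"
  assumes mono: "mono_on {0<..<1} f"
    and a: "a \<in> {0<..<1}" "f a < m" and v: "v \<in> {0<..<1}" "m < f v"
  obtains t where "t \<in> {0<..<1}" "\<And>u. u \<in> {0<..<1} \<Longrightarrow> u < t \<Longrightarrow> f u \<le> m"
    "\<And>u. u \<in> {0<..<1} \<Longrightarrow> t < u \<Longrightarrow> m \<le> f u"
proof -
  define A where "A = {u \<in> {0<..<1}. f u \<le> m}"
  have below_v: "x < v" if "x \<in> A" for x
  proof (rule ccontr)
    assume "\<not> x < v"
    then have "f v \<le> f x"
      using that v by (intro mono_onD[OF mono]) (auto simp: A_def)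
    then show False using that v by (auto simp: A_def)
  qed
  have "a \<in> A" using a by (simp add: A_def)
  then have A: "A \<noteq> {}" "bdd_above A"
    using below_v by (auto intro!: bdd_aboveI[of _ v] less_imp_le)
  define t where "t = Sup A"
  have "a \<le> t" "t \<le> v"
    unfolding t_def using \<open>a \<in> A\<close> A below_v by (auto intro: cSup_upper cSup_least less_imp_le)
  then have t: "t \<in> {0<..<1}" using a v by auto
  show thesis
  proof (rule that[OF t])
    fix u assume u: "u \<in> {0<..<1}" "u < t"
    then obtain x where x: "x \<in> A" "u < x"
      using less_cSup_iff[OF A] by (auto simp: t_def)
    then have "f u \<le> f x"
      using u by (intro mono_onD[OF mono]) (auto simp: A_def)
    then show "f u \<le> m" using x by (simp add: A_def)
  next
    fix u assume u: "u \<in> {0<..<1}" "t < u"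
    then have "u \<notin> A"
      using cSup_upper[OF _ A(2)] by (force simp: t_def)
    then show "m \<le> f u" using u by (simp add: A_def)
  qed
qed

lemma in_K_mean_crossing:
  assumes K: "in_K f"
  obtains t where "t \<in> {0<..<1}"
    "\<And>u. u \<in> {0<..<1} \<Longrightarrow> u < t \<Longrightarrow> f u \<le> integral\<^sup>L U01 f"
    "\<And>u. u \<in> {0<..<1} \<Longrightarrow> t < u \<Longrightarrow> integral\<^sup>L U01 f \<le> f u"
proof -
  note crossing = that
  define m where "m = integral\<^sup>L U01 f"
  have int: "integrable U01 f"
    using in_KD(1)[OF K] by (rule L2_integrable)
  have const: thesis if ae: "AE u in U01. f u = m"
  proof -
    have "f u = m" if "u \<in> {0<..<1}" for u
      using in_K_AE_eq[OF K in_K_const ae that] .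
    then show thesis by (intro crossing[of "1/2"]) (auto simp: m_def)
  qed
  consider "\<forall>u\<in>{0<..<1}. f u \<le> m" | "\<forall>u\<in>{0<..<1}. m \<le> f u"
    | a v where "a \<in> {0<..<1}" "f a < m" "v \<in> {0<..<1}" "m < f v"
    by (meson not_le)
  then show thesis
  proof cases
    case 1
    then show thesis
      using const AE_eq_integral_of_le[OF int] by (simp add: m_def)
  next
    case 2
    then have "AE u in U01. - f u = - m"
      using AE_eq_integral_of_le[of "\<lambda>u. - f u"] int by (simp add: m_def)
    then show thesis
      using const by simp
  next
    case 3
    then show thesis
      using mono_on_crossing[OF in_KD(2)[OF K]] crossing unfolding m_def by blast
  qed
qed

lemma ip_centered_mono_nonneg:
  assumes Q: "L2 Q" "mono_on {0<..<1} Q" and K: "in_K f"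
  shows "0 \<le> ip (\<lambda>u. Q u - integral\<^sup>L U01 Q) f"
proof -
  define m where "m = integral\<^sup>L U01 f"
  obtain t where t: "t \<in> {0<..<1}" "\<And>u. u \<in> {0<..<1} \<Longrightarrow> u < t \<Longrightarrow> f u \<le> m"
    "\<And>u. u \<in> {0<..<1} \<Longrightarrow> t < u \<Longrightarrow> m \<le> f u"
    using in_K_mean_crossing[OF K] unfolding m_def by blast
  have Lf: "L2 f" using K by (rule in_KD)
  have "0 \<le> ip (\<lambda>u. Q u - Q t) (\<lambda>u. f u - m)"
    unfolding ip_def
  proof (rule Bochner_Integration.integral_nonneg)
    fix u assume "u \<in> space U01"
    then have u: "u \<in> {0<..<1}" by simp
    consider "u < t" | "u = t" | "t < u" by linarith
    then show "0 \<le> (Q u - Q t) * (f u - m)"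
    proof cases
      case 1
      then have "Q u \<le> Q t" using u t by (intro mono_onD[OF Q(2)]) auto
      then show ?thesis using t(2)[OF u 1] by (simp add: mult_nonpos_nonpos)
    next
      case 3
      then have "Q t \<le> Q u" using u t by (intro mono_onD[OF Q(2)]) auto
      then show ?thesis using t(3)[OF u 3] by simp
    qed simp
  qed
  also have "\<dots> = ip Q f - m * integral\<^sup>L U01 Q"
    by (simp add: ip_shift[OF Q(1) Lf] m_def)
  also have "\<dots> = ip (\<lambda>u. Q u - integral\<^sup>L U01 Q) f"
    using ip_shift[OF Q(1) Lf, of "integral\<^sup>L U01 Q" 0] by (simp add: m_def)
  finally show ?thesis .
qed

section \<open>Quantile functions and the constraint set \<open>Mq\<close>\<close>

context
  fixes N :: "real measure"
  assumes N: "real_distribution N"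
begin

interpretation cdf_distribution N
  by (simp add: cdf_distribution.intro N)

lemma quantile_measurable: "quantile (cdf N) \<in> borel_measurable U01"
  unfolding quantile_def borel_measurable_U01 by (rule measurable_CI)

lemma distr_U01_quantile: "distr U01 borel (quantile (cdf N)) = N"
  unfolding U01_def quantile_def by (rule distr_I_eq_M)

lemma quantile_le_iff: "u \<in> {0<..<1} \<Longrightarrow> quantile (cdf N) u \<le> x \<longleftrightarrow> u \<le> cdf N x"
  unfolding quantile_def using pseudoinverse[of u x] by simp

lemma quantile_mono: "mono_on {0<..<1} (quantile (cdf N))"
  unfolding quantile_def using mono_I by simp

lemma quantile_left_continuous:
  assumes u: "u \<in> {0<..<1}"
  shows "continuous (at_left u) (quantile (cdf N))"
proof -
  let ?q = "quantile (cdf N)"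
  have "(?q \<longlongrightarrow> ?q u) (at_left u)"
  proof (rule order_tendstoI)
    fix a assume "a < ?q u"
    then have "cdf N a < u" using quantile_le_iff[OF u, of a] by simp
    then have "eventually (\<lambda>v. max (cdf N a) 0 < v \<and> v < u) (at_left u)"
      using u by (intro eventually_mono[OF eventually_at_left_real[of "max (cdf N a) 0" u]]) auto
    then show "eventually (\<lambda>v. a < ?q v) (at_left u)"
    proof (rule eventually_mono)
      fix v assume v: "max (cdf N a) 0 < v \<and> v < u"
      then have "v \<in> {0<..<1}" "\<not> v \<le> cdf N a" using u by auto
      then show "a < ?q v" using quantile_le_iff[of v a] by simp
    qed
  next
    fix a assume "?q u < a"
    have "eventually (\<lambda>v. 0 < v \<and> v < u) (at_left u)"
      using u by (intro eventually_mono[OF eventually_at_left_real[of 0 u]]) auto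
    then show "eventually (\<lambda>v. ?q v < a) (at_left u)"
    proof (rule eventually_mono)
      fix v assume "0 < v \<and> v < u"
      then have "?q v \<le> ?q u" using u by (intro mono_onD[OF quantile_mono]) auto
      then show "?q v < a" using \<open>?q u < a\<close> by simp
    qed
  qed
  then show ?thesis by (simp add: continuous_within)
qed

lemma integral_quantile:
  fixes f :: "real \<Rightarrow> real"
  assumes "f \<in> borel_measurable borel"
  shows "integral\<^sup>L N f = integral\<^sup>L U01 (\<lambda>u. f (quantile (cdf N) u))"
  using integral_distr[OF quantile_measurable assms] by (simp add: distr_U01_quantile)

lemma integrable_quantile_iff:
  fixes f :: "real \<Rightarrow> real"
  assumes "f \<in> borel_measurable borel"
  shows "integrable N f \<longleftrightarrow> integrable U01 (\<lambda>u. f (quantile (cdf N) u))"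
  using integrable_distr_eq[OF quantile_measurable assms] by (simp add: distr_U01_quantile)

lemma quantile_in_K:
  assumes "integrable N (\<lambda>x. x\<^sup>2)"
  shows "in_K (quantile (cdf N))"
  using assms quantile_measurable quantile_mono quantile_left_continuous
    integrable_quantile_iff[of "\<lambda>x. x\<^sup>2"]
  by (simp add: in_K_def L2_def)

end

lemma sets_U01_sublevel:
  fixes h :: "real \<Rightarrow> real"
  assumes "h \<in> borel_measurable U01"
  shows "{v\<in>{0<..<1}. h v \<le> x} \<in> sets U01"
proof -
  have "{v\<in>{0<..<1}. h v \<le> x} = h -` {..x} \<inter> space U01" by auto
  also have "\<dots> \<in> sets U01" using measurable_sets[OF assms, of "{..x}"] by simp
  finally show ?thesis .
qed

lemma cdf_distr_U01:
  assumes "h \<in> borel_measurable U01"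
  shows "cdf (distr U01 borel h) x = measure U01 {v\<in>{0<..<1}. h v \<le> x}"
  unfolding cdf_def
  by (subst measure_distr[OF assms]) (auto simp: vimage_def Int_def intro!: arg_cong2[where f=measure])

lemma quantile_cdf_distr_U01:
  assumes K: "in_K h" and u: "u \<in> {0<..<1}"
  shows "quantile (cdf (distr U01 borel h)) u = h u"
proof -
  have hm: "h \<in> U01 \<rightarrow>\<^sub>M borel" using in_KD(1)[OF K] by (rule L2D)
  have mono: "mono_on {0<..<1} h" using K by (rule in_KD)
  note sets = sets_U01_sublevel[OF hm] and cdf = cdf_distr_U01[OF hm]
  let ?S = "{x. u \<le> cdf (distr U01 borel h) x}"
  have "h u \<in> ?S"
  proof -
    have "{0<..u} \<subseteq> {v\<in>{0<..<1}. h v \<le> h u}"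
      using u by (auto intro: mono_onD[OF mono])
    then have "measure U01 {0<..u} \<le> measure U01 {v\<in>{0<..<1}. h v \<le> h u}"
      by (rule U01.finite_measure_mono[OF _ sets])
    moreover have "measure U01 {0<..u} = u"
      using u by (subst measure_U01) auto
    ultimately show ?thesis by (simp add: cdf)
  qed
  moreover have "h u \<le> x" if "x \<in> ?S" for x
  proof (rule ccontr)
    assume "\<not> h u \<le> x"
    then have "eventually (\<lambda>v. x < h v) (at_left u)"
      using in_KD(3)[OF K u] by (intro order_tendstoD) (auto simp: continuous_within)
    then obtain b where b: "b < u" "\<And>v. b < v \<Longrightarrow> v < u \<Longrightarrow> x < h v"
      by (auto simp: eventually_at_left_field)
    define b' where "b' = max b 0"
    have b': "0 \<le> b'" "b' < u" using b u by (auto simp: b'_def)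
    have "{v\<in>{0<..<1}. h v \<le> x} \<subseteq> {0<..b'}"
    proof
      fix v assume v: "v \<in> {v\<in>{0<..<1}. h v \<le> x}"
      have "\<not> b' < v"
      proof
        assume "b' < v"
        show False
        proof (cases "v < u")
          case True then show ?thesis using b(2)[of v] \<open>b' < v\<close> v by (auto simp: b'_def)
        next
          case False
          then have "h u \<le> h v" using u v by (intro mono_onD[OF mono]) auto
          then show ?thesis using v \<open>\<not> h u \<le> x\<close> by auto
        qed
      qed
      then show "v \<in> {0<..b'}" using v by auto
    qed
    then have "measure U01 {v\<in>{0<..<1}. h v \<le> x} \<le> measure U01 {0<..b'}"
      using b' u by (intro U01.finite_measure_mono) (auto simp: sets_U01_iff)
    also have "\<dots> = b'" using b' u by (subst measure_U01) auto
    finally show False using that b' by (simp add: cdf)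
  qed
  ultimately have "Inf ?S = h u" by (rule cInf_eq_minimum)
  then show ?thesis by (simp add: quantile_def)
qed

lemma Mq_iff:
  "h \<in> Mq \<mu> \<sigma> \<longleftrightarrow>
     in_K h \<and> integral\<^sup>L U01 h = \<mu> \<and> integral\<^sup>L U01 (\<lambda>u. (h u - \<mu>)\<^sup>2) = \<sigma>\<^sup>2"
proof
  assume "h \<in> Mq \<mu> \<sigma>"
  then obtain N where N: "real_distribution N" "integrable N (\<lambda>x. x\<^sup>2)"
    "prob_space.expectation N (\<lambda>x. x) = \<mu>" "prob_space.variance N (\<lambda>x. x) = \<sigma>\<^sup>2"
    and h: "\<And>u. u \<in> {0<..<1} \<Longrightarrow> h u = quantile (cdf N) u"
    unfolding Mq_def by blast
  have "in_K h" using in_K_cong[OF quantile_in_K[OF N(1,2)]] h by metis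
  moreover have "integral\<^sup>L U01 h = integral\<^sup>L U01 (quantile (cdf N))"
    by (rule Bochner_Integration.integral_cong) (simp_all add: h)
  then have "integral\<^sup>L U01 h = \<mu>"
    using integral_quantile[OF N(1), of "\<lambda>x. x"] N(3) by simp
  moreover have "integral\<^sup>L U01 (\<lambda>u. (h u - \<mu>)\<^sup>2)
      = integral\<^sup>L U01 (\<lambda>u. (quantile (cdf N) u - \<mu>)\<^sup>2)"
    by (rule Bochner_Integration.integral_cong) (simp_all add: h)
  then have "integral\<^sup>L U01 (\<lambda>u. (h u - \<mu>)\<^sup>2) = \<sigma>\<^sup>2"
    using integral_quantile[OF N(1), of "\<lambda>x. (x - \<mu>)\<^sup>2"] N(3,4) by simp
  ultimately show "in_K h \<and> integral\<^sup>L U01 h = \<mu> \<and> integral\<^sup>L U01 (\<lambda>u. (h u - \<mu>)\<^sup>2) = \<sigma>\<^sup>2"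
    by blast
next
  assume h: "in_K h \<and> integral\<^sup>L U01 h = \<mu> \<and> integral\<^sup>L U01 (\<lambda>u. (h u - \<mu>)\<^sup>2) = \<sigma>\<^sup>2"
  have L: "L2 h" using h by (auto dest: in_KD)
  have hm: "h \<in> U01 \<rightarrow>\<^sub>M borel" using L by (rule L2D)
  define N where "N = distr U01 borel h"
  have N: "real_distribution N"
    unfolding N_def real_distribution_def real_distribution_axioms_def
    by (auto intro!: prob_space.prob_space_distr prob_space_U01 hm)
  interpret N: real_distribution N by (rule N)
  have integral_N: "integral\<^sup>L N f = integral\<^sup>L U01 (\<lambda>u. f (h u))"
    if "f \<in> borel_measurable borel" for f :: "real \<Rightarrow> real"
    unfolding N_def by (rule integral_distr[OF hm that])
  have "integrable N (\<lambda>x. x\<^sup>2)"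
    unfolding N_def using integrable_distr_eq[OF hm, of "\<lambda>x. x\<^sup>2"] L2D(2)[OF L] by simp
  moreover have "N.expectation (\<lambda>x. x) = \<mu>"
    using integral_N[of "\<lambda>x. x"] h by simp
  moreover have "N.variance (\<lambda>x. x) = \<sigma>\<^sup>2"
    using integral_N[of "\<lambda>x. (x - \<mu>)\<^sup>2"] integral_N[of "\<lambda>x. x"] h by simp
  moreover have "\<forall>u\<in>{0<..<1}. h u = quantile (cdf N) u"
    using quantile_cdf_distr_U01 h by (simp add: N_def)
  ultimately show "h \<in> Mq \<mu> \<sigma>"
    unfolding Mq_def using N by blast
qed

section \<open>Projection onto the cone\<close>

definition zero_ext :: "(real \<Rightarrow> real) \<Rightarrow> real \<Rightarrow> real" where
  "zero_ext f u = (if u \<in> {0<..<1} then f u else 0)"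

lemma Kcone_in_K: "k \<in> Kcone \<Longrightarrow> in_K k"
  by (auto simp: Kcone_def sq_int01_def in_K_def L2_def set_integrable_U01 borel_measurable_U01I)

lemma zero_ext_in_Kcone:
  assumes "in_K f"
  shows "zero_ext f \<in> Kcone"
proof -
  have L: "L2 f" using assms by (rule in_KD)
  have "(\<lambda>x. indicator {0<..<1} x *\<^sub>R f x) = zero_ext f"
    by (auto simp: zero_ext_def indicator_def)
  then have "zero_ext f \<in> borel_measurable lborel"
    using L2D(1)[OF L] borel_measurable_U01_iff by metis
  moreover have "integrable U01 (\<lambda>u. (zero_ext f u)\<^sup>2)"
    using L2D(2)[OF L] by (rule Bochner_Integration.integrable_cong[THEN iffD1, rotated 2])
      (auto simp: zero_ext_def)
  moreover have "in_K (zero_ext f)"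
    using in_K_cong[OF assms] by (simp add: zero_ext_def)
  ultimately show ?thesis
    by (simp add: Kcone_def sq_int01_def in_K_def set_integrable_U01)
qed

lemma L2dist2_eq_ip: "L2dist2 w k = ip (\<lambda>u. w u - k u) (\<lambda>u. w u - k u)"
  unfolding L2dist2_def set_lebesgue_integral_U01 ip_self ..

definition is_proj :: "(real \<Rightarrow> real) \<Rightarrow> (real \<Rightarrow> real) \<Rightarrow> bool" where
  "is_proj w k \<longleftrightarrow> k \<in> Kcone \<and> (\<forall>u. u \<notin> {0<..<1} \<longrightarrow> k u = 0) \<and>
                     (\<forall>k'\<in>Kcone. L2dist2 w k \<le> L2dist2 w k')"

lemma kup_is_proj:
  assumes "\<exists>k. is_proj (\<lambda>u. \<gamma> u + lam * Q u) k"
  shows "is_proj (\<lambda>u. \<gamma> u + lam * Q u) (kup \<gamma> Q lam)"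
  using someI_ex[OF assms[unfolded is_proj_def]] unfolding kup_def is_proj_def .

lemma is_proj_in_K: "is_proj w k \<Longrightarrow> in_K k"
  by (simp add: is_proj_def Kcone_in_K)

lemma is_proj_le:
  assumes "is_proj w k" "in_K f"
  shows "ip (\<lambda>u. w u - k u) (\<lambda>u. w u - k u) \<le> ip (\<lambda>u. w u - f u) (\<lambda>u. w u - f u)"
proof -
  have "L2dist2 w k \<le> L2dist2 w (zero_ext f)"
    using assms zero_ext_in_Kcone by (simp add: is_proj_def)
  also have "L2dist2 w (zero_ext f) = ip (\<lambda>u. w u - f u) (\<lambda>u. w u - f u)"
    unfolding L2dist2_eq_ip by (rule ip_cong) (auto simp: zero_ext_def)
  finally show ?thesis by (simp add: L2dist2_eq_ip)
qed

lemma linear_le_quadratic_imp_nonpos: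
  fixes B C :: real
  assumes "\<And>t. 0 < t \<Longrightarrow> t \<le> 1 \<Longrightarrow> 2 * t * B \<le> t\<^sup>2 * C"
  shows "B \<le> 0"
proof (rule ccontr)
  assume "\<not> B \<le> 0"
  define t where "t = min 1 (B / (\<bar>C\<bar> + 1))"
  have t: "0 < t" "t \<le> 1" using \<open>\<not> B \<le> 0\<close> by (auto simp: t_def)
  have "2 * t * B \<le> t\<^sup>2 * C" using assms t by blast
  then have "2 * B \<le> t * C" using t by (simp add: power2_eq_square mult.assoc)
  also have "\<dots> \<le> t * \<bar>C\<bar>" using t by (intro mult_left_mono) auto
  also have "\<dots> \<le> (B / (\<bar>C\<bar> + 1)) * \<bar>C\<bar>" by (intro mult_right_mono) (auto simp: t_def)
  also have "\<dots> < B" using \<open>\<not> B \<le> 0\<close> by (simp add: field_simps)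
  finally show False using \<open>\<not> B \<le> 0\<close> by simp
qed

lemma is_proj_variational:
  assumes w: "L2 w" and k: "is_proj w k" and f: "in_K f"
  shows "ip (\<lambda>u. w u - k u) (\<lambda>u. f u - k u) \<le> 0"
proof (rule linear_le_quadratic_imp_nonpos)
  fix t :: real assume t: "0 < t" "t \<le> 1"
  have Kk: "in_K k" using k by (rule is_proj_in_K)
  let ?a = "\<lambda>u. w u - k u" and ?d = "\<lambda>u. f u - k u"
  have La: "L2 ?a" "L2 ?d" using w Kk f by (auto intro: L2_diff dest: in_KD)
  have "in_K (\<lambda>u. (1 - t) * k u + t * f u + 0)"
    using t by (intro in_K_comb Kk f) auto
  from is_proj_le[OF k this]
  have "ip ?a ?a \<le> ip (\<lambda>u. w u - ((1 - t) * k u + t * f u + 0)) (\<lambda>u. w u - ((1 - t) * k u + t * f u + 0))" .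
  also have "\<dots> = ip (\<lambda>u. ?a u - t * ?d u) (\<lambda>u. ?a u - t * ?d u)"
    by (rule ip_cong) (simp_all add: algebra_simps)
  also have "\<dots> = ip ?a ?a - 2 * t * ip ?a ?d + t\<^sup>2 * ip ?d ?d"
    by (rule ip_diff_self[OF La])
  finally show "2 * t * ip ?a ?d \<le> t\<^sup>2 * ip ?d ?d" by simp
qed

text \<open>These hold because \<open>K\<close> contains the constants and is closed under non-negative scaling.\<close>

lemma is_proj_orthogonal:
  assumes w: "L2 w" and k: "is_proj w k"
  shows is_proj_ip_nonpos: "\<And>f. in_K f \<Longrightarrow> ip (\<lambda>u. w u - k u) f \<le> 0"
    and is_proj_ip_self: "ip (\<lambda>u. w u - k u) k = 0"
    and is_proj_integral: "integral\<^sup>L U01 (\<lambda>u. w u - k u) = 0"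
proof -
  have Kk: "in_K k" using k by (rule is_proj_in_K)
  have Lk: "L2 k" using Kk by (rule in_KD)
  let ?a = "\<lambda>u. w u - k u"
  have La: "L2 ?a" using w Lk by (rule L2_diff)
  have shift: "ip ?a (\<lambda>u. f u - k u) = ip ?a f - ip ?a k" if "L2 f" for f
    by (rule ip_diff_right[OF that Lk La])
  have "ip ?a (\<lambda>u. 2 * k u - k u) \<le> 0"
    using is_proj_variational[OF w k in_K_affine[OF Kk, of 2 0]] by simp
  moreover have "ip ?a (\<lambda>u. 0 - k u) \<le> 0"
    using is_proj_variational[OF w k in_K_const] .
  ultimately show ak: "ip ?a k = 0"
    using ip_scale_right[of ?a "-1" k] by simp
  have "ip ?a (\<lambda>u. (k u + c) - k u) \<le> 0" for c
    using is_proj_variational[OF w k in_K_affine[OF Kk, of 1 c]] by simp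
  then have "c * integral\<^sup>L U01 ?a \<le> 0" for c
    by (simp add: ip_const_right)
  from this[of 1] this[of "-1"] show "integral\<^sup>L U01 ?a = 0" by simp
  show "ip ?a f \<le> 0" if "in_K f" for f
    using is_proj_variational[OF w k that] shift[of f] ak that by (simp add: in_KD)
qed

lemma is_proj_nonexpansive:
  assumes w1: "L2 w1" and w2: "L2 w2" and k1: "is_proj w1 k1" and k2: "is_proj w2 k2"
  shows "L2norm (\<lambda>u. k1 u - k2 u) \<le> L2norm (\<lambda>u. w1 u - w2 u)"
proof -
  have K1: "in_K k1" and K2: "in_K k2" using k1 k2 by (auto intro: is_proj_in_K)
  have L1: "L2 k1" and L2': "L2 k2" using K1 K2 by (auto dest: in_KD)
  let ?dk = "\<lambda>u. k1 u - k2 u" and ?dw = "\<lambda>u. w1 u - w2 u"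
  have Ldk: "L2 ?dk" and Ldw: "L2 ?dw" using L1 L2' w1 w2 by (auto intro: L2_diff)
  have "ip (\<lambda>u. w1 u - k1 u) (\<lambda>u. (-1) * ?dk u) \<le> 0"
    using is_proj_variational[OF w1 k1 K2] by simp
  moreover have "ip (\<lambda>u. w2 u - k2 u) ?dk \<le> 0"
    using is_proj_variational[OF w2 k2 K1] .
  moreover have "ip (\<lambda>u. w1 u - k1 u) ?dk - ip (\<lambda>u. w2 u - k2 u) ?dk = ip ?dw ?dk - ip ?dk ?dk"
  proof -
    have "ip (\<lambda>u. w1 u - k1 u) ?dk - ip (\<lambda>u. w2 u - k2 u) ?dk
        = ip (\<lambda>u. ?dw u - ?dk u) ?dk"
      using w1 w2 L1 L2' Ldk by (subst ip_diff_left[symmetric]) (auto intro: L2_diff simp: algebra_simps)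
    then show ?thesis using ip_diff_left[OF Ldw Ldk Ldk] by simp
  qed
  ultimately have "ip ?dk ?dk \<le> ip ?dw ?dk"
    unfolding ip_scale_right by linarith
  also have "\<dots> \<le> L2norm ?dw * L2norm ?dk"
    using ip_Cauchy_Schwarz[OF Ldw Ldk] by linarith
  finally have "(L2norm ?dk)\<^sup>2 \<le> L2norm ?dw * L2norm ?dk"
    by (simp add: L2norm_sq)
  then show ?thesis
    using L2norm_nonneg[of ?dk] L2norm_nonneg[of ?dw]
    by (cases "L2norm ?dk = 0") (simp_all add: power2_eq_square)
qed

text \<open>A decreasing homeomorphism of the real line onto (0,1) and its inverse. Composing with it
  turns left-continuity on (0,1) into right-continuity on the line, which lets us apply Helly's
  selection theorem to non-decreasing left-continuous functions on (0,1).\<close>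

definition onto01 :: "real \<Rightarrow> real" where
  "onto01 x = 1 / (1 + exp x)"

definition from01 :: "real \<Rightarrow> real" where
  "from01 u = ln ((1 - u) / u)"

lemma onto01_in: "onto01 x \<in> {0<..<1}"
  unfolding onto01_def
  by (metis add_pos_nonneg divide_eq_eq_1 divide_le_eq_1_pos divide_pos_pos exp_gt_zero
      greaterThanLessThan_iff less_add_same_cancel1 less_le zero_less_one order.strict_implies_order)

lemma onto01_from01:
  assumes "u \<in> {0<..<1}"
  shows "onto01 (from01 u) = u"
proof -
  have "exp (from01 u) = (1 - u) / u" using assms by (simp add: from01_def)
  then have "1 + exp (from01 u) = 1 / u" using assms by (simp add: field_simps)
  then show ?thesis by (simp add: onto01_def)
qed

lemma onto01_strict_antimono:
  assumes "x < y"
  shows "onto01 y < onto01 x"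
proof -
  have "exp x < exp y" using assms by simp
  moreover have "0 < 1 + exp x" "0 < 1 + exp y"
    using exp_gt_zero[of x] exp_gt_zero[of y] by linarith+
  ultimately show ?thesis unfolding onto01_def
    by (intro divide_strict_left_mono) (auto intro: mult_pos_pos)
qed

lemma onto01_antimono: "x \<le> y \<Longrightarrow> onto01 y \<le> onto01 x"
  using onto01_strict_antimono by (cases "x = y") (auto simp: le_less)

lemma from01_strict_antimono:
  assumes "u \<in> {0<..<1}" "v \<in> {0<..<1}" "u < v"
  shows "from01 v < from01 u"
  using onto01_antimono[of "from01 u" "from01 v"] assms by (force simp: onto01_from01)

lemma from01_antimono: "u \<in> {0<..<1} \<Longrightarrow> v \<in> {0<..<1} \<Longrightarrow> u \<le> v \<Longrightarrow> from01 v \<le> from01 u"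
  using from01_strict_antimono by (cases "u = v") (auto simp: le_less)

lemma filterlim_onto01: "filterlim onto01 (at_left (onto01 x)) (at_right x)"
proof -
  have "1 + exp x \<noteq> 0" using exp_gt_zero[of x] by linarith
  then have "isCont onto01 x"
    unfolding onto01_def by (intro continuous_intros)
  then have "(onto01 \<longlongrightarrow> onto01 x) (at_right x)"
    by (simp add: isCont_def filterlim_at_split)
  moreover have "eventually (\<lambda>y. onto01 y \<in> {..<onto01 x} \<and> onto01 y \<noteq> onto01 x) (at_right x)"
    by (auto simp: eventually_at_right_field intro!: exI[of _ "x + 1"] dest: onto01_strict_antimono)
  ultimately show ?thesis by (simp add: filterlim_at)
qed

lemma filterlim_from01:
  assumes u: "u \<in> {0<..<1}"
  shows "filterlim from01 (at_right (from01 u)) (at_left u)"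
proof -
  have "isCont from01 u"
    unfolding from01_def using u by (intro continuous_intros) auto
  then have "(from01 \<longlongrightarrow> from01 u) (at_left u)"
    by (simp add: isCont_def filterlim_at_split)
  moreover have "eventually (\<lambda>v. v \<in> {0<..<u}) (at_left u)"
    using u by (intro eventually_at_left_real) auto
  then have "eventually (\<lambda>v. from01 v \<in> {from01 u<..} \<and> from01 v \<noteq> from01 u) (at_left u)"
    by (rule eventually_mono) (use u from01_strict_antimono in fastforce)
  ultimately show ?thesis by (simp add: filterlim_at)
qed

context
  fixes k :: "nat \<Rightarrow> real \<Rightarrow> real" and C :: "real \<Rightarrow> real"
  assumes mono: "\<And>n. mono_on {0<..<1} (k n)"
    and left_cont: "\<And>n u. u \<in> {0<..<1} \<Longrightarrow> continuous (at_left u) (k n)"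
    and bound: "\<And>n u. u \<in> {0<..<1} \<Longrightarrow> \<bar>k n u\<bar> \<le> C u"
begin

text \<open>The functions \<open>x \<mapsto> - arctan (k n (onto01 x))\<close> are non-decreasing, right-continuous and
  bounded by \<open>pi / 2\<close>, so Helly's theorem applies to them.\<close>

lemma helly_arctan:
  obtains s F where "strict_mono s" "mono F" "\<And>x. continuous (at_right x) F"
    "\<And>x. isCont F x \<Longrightarrow> (\<lambda>n. - arctan (k (s n) (onto01 x))) \<longlonglongrightarrow> F x"
proof -
  define G where "G n x = - arctan (k n (onto01 x))" for n x
  have "mono (G n)" for n
  proof (rule monoI)
    fix x y :: real assume "x \<le> y"
    then have "k n (onto01 y) \<le> k n (onto01 x)"
      using onto01_in by (intro mono_onD[OF mono] onto01_antimono) auto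
    then show "G n x \<le> G n y" by (simp add: G_def arctan_monotone')
  qed
  moreover have "continuous (at_right x) (G n)" for n x
  proof -
    have "(k n \<longlongrightarrow> k n (onto01 x)) (at_left (onto01 x))"
      using left_cont[OF onto01_in] by (simp add: continuous_within)
    then have "((\<lambda>y. k n (onto01 y)) \<longlongrightarrow> k n (onto01 x)) (at_right x)"
      by (rule filterlim_compose[OF _ filterlim_onto01])
    then show ?thesis
      unfolding G_def continuous_within by (intro tendsto_minus tendsto_arctan)
  qed
  moreover have "\<bar>G n x\<bar> \<le> pi / 2" for n x
    using arctan_lbound[of "k n (onto01 x)"] arctan_ubound[of "k n (onto01 x)"]
    by (simp add: G_def abs_le_iff)
  ultimately obtain s F where "strict_mono (s :: nat \<Rightarrow> nat)" "mono F"
    "\<And>x. continuous (at_right x) F" "\<And>x. isCont F x \<Longrightarrow> (\<lambda>n. G (s n) x) \<longlonglongrightarrow> F x"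
    using Helly_selection[of G "pi / 2"] by blast
  then show thesis
    using that unfolding G_def by blast
qed

text \<open>The pointwise bound keeps the limit away from \<open>\<plusminus>pi / 2\<close>, so that \<open>tan\<close> can undo the
  \<open>arctan\<close>.\<close>

lemma helly_arctan_limit_bounded:
  assumes s: "\<And>x. isCont F x \<Longrightarrow> (\<lambda>n. - arctan (k (s n) (onto01 x))) \<longlonglongrightarrow> F x"
    and F: "mono F"
  shows "- (pi / 2) < F x \<and> F x < pi / 2"
proof -
  define D where "D = {a. \<not> isCont F a}"
  have D: "countable D" unfolding D_def by (rule mono_ctble_discont[OF F])
  obtain x1 where x1: "x < x1" "x1 \<notin> D"
    using open_minus_countable[OF D, of "{x<..}"] by auto
  obtain x2 where x2: "x2 < x" "x2 \<notin> D"
    using open_minus_countable[OF D, of "{..<x}"] by auto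
  have "- arctan (k (s n) (onto01 x1)) \<le> arctan (C (onto01 x1))" for n
    using bound[OF onto01_in, of "s n" x1] by (simp add: arctan_minus[symmetric] arctan_monotone' abs_le_iff)
  moreover have "(\<lambda>n. - arctan (k (s n) (onto01 x1))) \<longlonglongrightarrow> F x1"
    using x1 s by (simp add: D_def)
  ultimately have "F x1 \<le> arctan (C (onto01 x1))"
    by (intro LIMSEQ_le_const2) auto
  moreover have "F x \<le> F x1" using x1 by (intro monoD[OF F]) auto
  moreover have "- arctan (C (onto01 x2)) \<le> F x2"
  proof (rule LIMSEQ_le_const)
    show "(\<lambda>n. - arctan (k (s n) (onto01 x2))) \<longlonglongrightarrow> F x2"
      using x2 s by (simp add: D_def)
    show "\<exists>N. \<forall>n\<ge>N. - arctan (C (onto01 x2)) \<le> - arctan (k (s n) (onto01 x2))"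
      using bound[OF onto01_in] by (simp add: arctan_monotone' abs_le_iff)
  qed
  moreover have "F x2 \<le> F x" using x2 by (intro monoD[OF F]) auto
  ultimately show ?thesis
    using arctan_ubound[of "C (onto01 x1)"] arctan_ubound[of "C (onto01 x2)"] by linarith
qed

lemma helly_selection_01:
  obtains s h where "strict_mono s" "mono_on {0<..<1} h"
    "\<And>u. u \<in> {0<..<1} \<Longrightarrow> continuous (at_left u) h"
    "AE u in U01. (\<lambda>n. k (s n) u) \<longlonglongrightarrow> h u"
proof -
  obtain s F where s: "strict_mono s" and F: "mono F" "\<And>x. continuous (at_right x) F"
    and lim: "\<And>x. isCont F x \<Longrightarrow> (\<lambda>n. - arctan (k (s n) (onto01 x))) \<longlonglongrightarrow> F x"
    using helly_arctan by blast
  have F_bounded: "- (pi / 2) < F x \<and> F x < pi / 2" for x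
    by (rule helly_arctan_limit_bounded[OF lim F(1)])
  then have isCont_tan: "isCont tan (F x)" for x
    using cos_gt_zero_pi[of "F x"] by (intro isCont_tan) simp
  define h where "h u = - tan (F (from01 u))" for u
  have "mono_on {0<..<1} h"
  proof (rule mono_onI)
    fix u v :: real assume uv: "u \<in> {0<..<1}" "v \<in> {0<..<1}" "u \<le> v"
    then have "F (from01 v) \<le> F (from01 u)" by (intro monoD[OF F(1)] from01_antimono)
    then show "h u \<le> h v"
      using F_bounded[of "from01 v"] F_bounded[of "from01 u"] by (simp add: h_def tan_mono_le)
  qed
  moreover have "continuous (at_left u) h" if u: "u \<in> {0<..<1}" for u
  proof -
    have "(F \<longlongrightarrow> F (from01 u)) (at_right (from01 u))"
      using F(2) by (simp add: continuous_within)
    then have "((\<lambda>v. F (from01 v)) \<longlongrightarrow> F (from01 u)) (at_left u)"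
      by (rule filterlim_compose[OF _ filterlim_from01[OF u]])
    then show ?thesis
      unfolding h_def continuous_within by (intro tendsto_minus isCont_tendsto_compose[OF isCont_tan])
  qed
  moreover have "AE u in U01. (\<lambda>n. k (s n) u) \<longlonglongrightarrow> h u"
  proof (rule AE_U01_countable)
    show "countable (onto01 ` {x. \<not> isCont F x})"
      using mono_ctble_discont[OF F(1)] by simp
    fix u assume u: "u \<in> {0<..<1}" "u \<notin> onto01 ` {x. \<not> isCont F x}"
    then have "(\<lambda>n. - arctan (k (s n) u)) \<longlonglongrightarrow> F (from01 u)"
      using lim[of "from01 u"] onto01_from01[OF u(1)] by (metis (mono_tags) image_eqI mem_Collect_eq)
    then have "(\<lambda>n. - tan (- arctan (k (s n) u))) \<longlonglongrightarrow> h u"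
      unfolding h_def by (intro tendsto_minus isCont_tendsto_compose[OF isCont_tan])
    then show "(\<lambda>n. k (s n) u) \<longlonglongrightarrow> h u"
      by (simp add: tan_arctan)
  qed
  ultimately show thesis using s that by blast
qed

end

lemma L2_dist_AE_limit:
  assumes w: "L2 w" and f: "\<And>n. L2 (f n)" and h: "h \<in> borel_measurable U01"
    and lim: "AE u in U01. (\<lambda>n. f n u) \<longlonglongrightarrow> h u"
    and bound: "\<And>n. ip (\<lambda>u. w u - f n u) (\<lambda>u. w u - f n u) \<le> c n" and c: "c \<longlonglongrightarrow> d"
  shows "L2 (\<lambda>u. w u - h u)" "ip (\<lambda>u. w u - h u) (\<lambda>u. w u - h u) \<le> d"
proof -
  have d: "0 \<le> d"
    using c by (rule LIMSEQ_le_const) (use bound ip_self_nonneg order_trans in blast)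
  have meas: "(\<lambda>u. (w u - h u)\<^sup>2) \<in> borel_measurable U01"
    using L2D(1)[OF w] h by measurable
  have "(\<integral>\<^sup>+ u. ennreal ((w u - h u)\<^sup>2) \<partial>U01) = (\<integral>\<^sup>+ u. liminf (\<lambda>n. ennreal ((w u - f n u)\<^sup>2)) \<partial>U01)"
    using lim
  proof (intro nn_integral_cong_AE, eventually_elim)
    case (elim u)
    have "liminf (\<lambda>n. ennreal ((w u - f n u)\<^sup>2)) = ennreal ((w u - h u)\<^sup>2)"
      by (intro lim_imp_Liminf tendsto_ennrealI tendsto_intros elim) simp
    then show ?case by simp
  qed
  also have "\<dots> \<le> liminf (\<lambda>n. \<integral>\<^sup>+ u. ennreal ((w u - f n u)\<^sup>2) \<partial>U01)"
    using L2D(1)[OF w] L2D(1)[OF f] by (intro nn_integral_liminf) measurable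
  also have "\<dots> \<le> liminf (\<lambda>n. ennreal (c n))"
  proof (intro Liminf_mono always_eventually allI)
    fix n
    have "(\<integral>\<^sup>+ u. ennreal ((w u - f n u)\<^sup>2) \<partial>U01) = ennreal (ip (\<lambda>u. w u - f n u) (\<lambda>u. w u - f n u))"
      using L2D(2)[OF L2_diff[OF w f]] by (simp add: ip_self nn_integral_eq_integral)
    then show "(\<integral>\<^sup>+ u. ennreal ((w u - f n u)\<^sup>2) \<partial>U01) \<le> ennreal (c n)"
      using bound[of n] by (simp add: ennreal_leI)
  qed
  also have "\<dots> = ennreal d"
    using c by (intro lim_imp_Liminf tendsto_ennrealI) simp_all
  finally have nn: "(\<integral>\<^sup>+ u. ennreal ((w u - h u)\<^sup>2) \<partial>U01) \<le> ennreal d" .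
  have int: "integrable U01 (\<lambda>u. (w u - h u)\<^sup>2)"
    using nn by (intro integrableI_bounded[OF meas]) (simp add: order.strict_trans1 ennreal_less_top)
  then show "L2 (\<lambda>u. w u - h u)"
    using L2D(1)[OF w] h by (simp add: L2_def)
  have "ennreal (ip (\<lambda>u. w u - h u) (\<lambda>u. w u - h u)) \<le> ennreal d"
    using nn int by (simp add: ip_self nn_integral_eq_integral)
  then show "ip (\<lambda>u. w u - h u) (\<lambda>u. w u - h u) \<le> d"
    using d by (simp add: ennreal_le_iff)
qed

lemma Inf_L2dist2_le: "k \<in> Kcone \<Longrightarrow> Inf (L2dist2 w ` Kcone) \<le> L2dist2 w k"
  by (rule cInf_lower) (auto intro!: bdd_belowI[of _ 0] simp: L2dist2_eq_ip ip_self_nonneg)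

lemma L2dist2_minimizing_seq:
  obtains kk where "\<And>n. kk n \<in> Kcone" "\<And>n. L2dist2 w (kk n) < Inf (L2dist2 w ` Kcone) + 1 / Suc n"
proof -
  have "zero_ext (\<lambda>u. 0) \<in> Kcone" by (rule zero_ext_in_Kcone) simp
  then have "\<exists>k\<in>Kcone. L2dist2 w k < Inf (L2dist2 w ` Kcone) + 1 / Suc n" for n
    using cInf_lessD[of "L2dist2 w ` Kcone" "Inf (L2dist2 w ` Kcone) + 1 / Suc n"] by auto
  then show thesis using that by metis
qed

lemma is_proj_exists:
  assumes w: "L2 w"
  shows "\<exists>k. is_proj w k"
proof -
  define d where "d = Inf (L2dist2 w ` Kcone)"
  obtain kk where kk: "\<And>n. kk n \<in> Kcone" "\<And>n. L2dist2 w (kk n) < d + 1 / Suc n"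
    using L2dist2_minimizing_seq unfolding d_def by blast
  have K: "in_K (kk n)" for n using kk(1) by (rule Kcone_in_K)
  have L2_kk: "L2 (kk n)" and mono_kk: "mono_on {0<..<1} (kk n)"
    and cont_kk: "u \<in> {0<..<1} \<Longrightarrow> continuous (at_left u) (kk n)" for n u
    using in_KD[OF K] by auto
  have dist_le: "ip (\<lambda>u. w u - kk n u) (\<lambda>u. w u - kk n u) \<le> d + 1" for n
  proof -
    have "1 / real (Suc n) \<le> 1" by simp
    then show ?thesis using kk(2)[of n] unfolding L2dist2_eq_ip by linarith
  qed
  define B where "B = L2norm w + sqrt (d + 1)"
  have norm_kk: "L2norm (kk n) \<le> B" for n
  proof -
    have "L2norm (kk n) = L2norm (\<lambda>u. w u + (- 1) * (w u - kk n u))" by simp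
    also have "\<dots> \<le> L2norm w + L2norm (\<lambda>u. (- 1) * (w u - kk n u))"
      using w L2_kk by (intro L2norm_triangle L2_scale L2_diff)
    also have "L2norm (\<lambda>u. (- 1) * (w u - kk n u)) \<le> sqrt (d + 1)"
      unfolding L2norm_scale by (simp add: L2norm_def dist_le)
    finally show ?thesis by (simp add: B_def)
  qed
  have bound: "\<bar>kk n u\<bar> \<le> B / sqrt (min u (1 - u))" if "u \<in> {0<..<1}" for n u
    using in_K_abs_bound[OF K that norm_kk] .
  obtain s h where s: "strict_mono s" and h: "mono_on {0<..<1} h"
    "\<And>u. u \<in> {0<..<1} \<Longrightarrow> continuous (at_left u) h"
    and lim: "AE u in U01. (\<lambda>n. kk (s n) u) \<longlonglongrightarrow> h u"
    using helly_selection_01[of kk "\<lambda>u. B / sqrt (min u (1 - u))", OF mono_kk cont_kk bound] by blast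
  have hm: "h \<in> borel_measurable U01"
    unfolding borel_measurable_U01 by (rule borel_measurable_mono_on_fnc[OF h(1)])
  have "(\<lambda>n. inverse (real (Suc (s n)))) \<longlonglongrightarrow> 0"
    using LIMSEQ_subseq_LIMSEQ[OF LIMSEQ_inverse_real_of_nat s] by (simp add: o_def)
  then have c: "(\<lambda>n. d + 1 / Suc (s n)) \<longlonglongrightarrow> d"
    using tendsto_add[OF tendsto_const, of _ 0 _ d] by (simp add: inverse_eq_divide)
  have "ip (\<lambda>u. w u - kk (s n) u) (\<lambda>u. w u - kk (s n) u) \<le> d + 1 / Suc (s n)" for n
    using kk(2)[of "s n"] by (simp add: L2dist2_eq_ip)
  note limit = L2_dist_AE_limit[of w "\<lambda>n. kk (s n)", OF w L2_kk hm lim this c]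
  have "L2 h"
    using L2_diff[OF w limit(1)] by simp
  then have "in_K h"
    using h by (simp add: in_K_def)
  have "L2dist2 w (zero_ext h) = ip (\<lambda>u. w u - h u) (\<lambda>u. w u - h u)"
    unfolding L2dist2_eq_ip by (rule ip_cong) (simp_all add: zero_ext_def)
  then have "L2dist2 w (zero_ext h) \<le> d"
    using limit(2) by simp
  then have "L2dist2 w (zero_ext h) \<le> L2dist2 w k'" if "k' \<in> Kcone" for k'
    using Inf_L2dist2_le[OF that, of w] unfolding d_def by linarith
  then have "is_proj w (zero_ext h)"
    unfolding is_proj_def using zero_ext_in_Kcone[OF \<open>in_K h\<close>] by (simp add: zero_ext_def)
  then show ?thesis by blast
qed

section \<open>Measurability of the weight\<close>

text \<open>A countable form of the Cauchy criterion for the left limit at \<open>x\<close>; unlike the existence of the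
  limit itself, it is visibly a measurable condition in \<open>x\<close>.\<close>

definition rat_left_Cauchy :: "(real \<Rightarrow> real) \<Rightarrow> real \<Rightarrow> bool" where
  "rat_left_Cauchy f x \<longleftrightarrow> (\<forall>m::nat. \<exists>n::nat. \<forall>a b::rat.
     x - 1 / Suc n < of_rat a \<and> of_rat a < x \<and> x - 1 / Suc n < of_rat b \<and> of_rat b < x \<longrightarrow>
       \<bar>f (of_rat a) - f (of_rat b)\<bar> \<le> 1 / Suc m)"

lemma rat_left_CauchyD:
  assumes cont: "continuous_on {..<x} f" and C: "rat_left_Cauchy f x"
  obtains n :: nat where "\<And>y z. x - 1 / Suc n < y \<Longrightarrow> y < x \<Longrightarrow> x - 1 / Suc n < z \<Longrightarrow> z < x \<Longrightarrow>
    \<bar>f y - f z\<bar> \<le> 1 / Suc m"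
proof -
  obtain n :: nat where n: "\<And>a b::rat. x - 1 / Suc n < of_rat a \<Longrightarrow> of_rat a < x \<Longrightarrow>
      x - 1 / Suc n < of_rat b \<Longrightarrow> of_rat b < x \<Longrightarrow> \<bar>f (of_rat a) - f (of_rat b)\<bar> \<le> 1 / Suc m"
    using C unfolding rat_left_Cauchy_def by blast
  let ?lo = "x - 1 / Suc n"
  have "\<bar>f y - f z\<bar> \<le> 1 / Suc m" if yz: "?lo < y" "y < x" "?lo < z" "z < x" for y z
  proof (rule ccontr)
    assume far: "\<not> \<bar>f y - f z\<bar> \<le> 1 / Suc m"
    define e where "e = (\<bar>f y - f z\<bar> - 1 / Suc m) / 2"
    have e: "0 < e" unfolding e_def using far by simp
    have "isCont f y" "isCont f z"
      using continuous_on_eq_continuous_at[OF open_lessThan, of x f] cont yz by blast+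
    then obtain d1 d2 where d: "0 < d1" "\<And>a. \<bar>a - y\<bar> < d1 \<Longrightarrow> \<bar>f a - f y\<bar> < e"
      "0 < d2" "\<And>a. \<bar>a - z\<bar> < d2 \<Longrightarrow> \<bar>f a - f z\<bar> < e"
      using e unfolding continuous_at_eps_delta dist_real_def by blast
    obtain ra where ra: "ra \<in> \<rat>" "max (y - d1) ?lo < ra" "ra < min (y + d1) x"
      using Rats_dense_in_real[of "max (y - d1) ?lo" "min (y + d1) x"] d yz by auto
    obtain rb where rb: "rb \<in> \<rat>" "max (z - d2) ?lo < rb" "rb < min (z + d2) x"
      using Rats_dense_in_real[of "max (z - d2) ?lo" "min (z + d2) x"] d yz by auto
    obtain a where a: "ra = of_rat a" using ra(1) Rats_cases by blast
    obtain b where b: "rb = of_rat b" using rb(1) Rats_cases by blast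
    have "\<bar>f ra - f rb\<bar> \<le> 1 / Suc m" unfolding a b using n ra rb a b by simp
    moreover have "\<bar>f ra - f y\<bar> < e" using d(1) ra by (intro d(2)) auto
    moreover have "\<bar>f rb - f z\<bar> < e" using d(3) rb by (intro d(4)) auto
    ultimately show False unfolding e_def by argo
  qed
  then show thesis using that by blast
qed

lemma tendsto_at_left_imp_rat_left_Cauchy:
  assumes l: "(f \<longlongrightarrow> l) (at_left x)"
  shows "rat_left_Cauchy f x"
  unfolding rat_left_Cauchy_def
proof
  fix m :: nat
  have "eventually (\<lambda>y. dist (f y) l < 1 / (2 * Suc m)) (at_left x)"
    using l by (rule tendstoD) simp
  then obtain b where b: "b < x" "\<And>y. b < y \<Longrightarrow> y < x \<Longrightarrow> dist (f y) l < 1 / (2 * Suc m)"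
    by (auto simp: eventually_at_left_field)
  obtain n :: nat where n: "inverse (Suc n) < x - b"
    using reals_Archimedean[of "x - b"] b by auto
  have "\<bar>f y - f z\<bar> \<le> 1 / Suc m" if "x - 1 / Suc n < y" "y < x" "x - 1 / Suc n < z" "z < x" for y z
  proof -
    have "b < y" "b < z" using that n by (simp_all add: inverse_eq_divide)
    then have "dist (f y) l < 1 / (2 * Suc m)" "dist (f z) l < 1 / (2 * Suc m)"
      using b(2) that by blast+
    then have "\<bar>f y - f z\<bar> < 2 * (1 / real (2 * Suc m))"
      unfolding dist_real_def by linarith
    also have "\<dots> = 1 / Suc m" by (simp add: field_simps)
    finally show ?thesis by simp
  qed
  then show "\<exists>n::nat. \<forall>a b::rat. x - 1 / Suc n < of_rat a \<and> of_rat a < x \<and>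
      x - 1 / Suc n < of_rat b \<and> of_rat b < x \<longrightarrow> \<bar>f (of_rat a) - f (of_rat b)\<bar> \<le> 1 / Suc m"
    by blast
qed

lemma rat_left_Cauchy_imp_tendsto:
  assumes cont: "continuous_on {..<x} f" and C: "rat_left_Cauchy f x"
  shows "\<exists>l. (f \<longlongrightarrow> l) (at_left x)"
proof -
  have "cauchy_filter (filtermap f (at_left x))"
    unfolding cauchy_filter_metric_filtermap
  proof (intro allI impI)
    fix e :: real assume "0 < e"
    then obtain m :: nat where m: "inverse (Suc m) < e"
      using reals_Archimedean by blast
    obtain n :: nat where n: "\<And>y z. x - 1 / Suc n < y \<Longrightarrow> y < x \<Longrightarrow> x - 1 / Suc n < z \<Longrightarrow> z < x \<Longrightarrow>
        \<bar>f y - f z\<bar> \<le> 1 / Suc m"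
      using rat_left_CauchyD[OF cont C] by blast
    have "eventually (\<lambda>y. x - 1 / Suc n < y \<and> y < x) (at_left x)"
      by (rule eventually_mono[OF eventually_at_left_real[of "x - 1 / Suc n" x]]) auto
    moreover have "dist (f y) (f z) < e" if "x - 1 / Suc n < y \<and> y < x" "x - 1 / Suc n < z \<and> z < x" for y z
      using n[of y z] that m by (simp add: dist_real_def inverse_eq_divide)
    ultimately show "\<exists>P. eventually P (at_left x) \<and> (\<forall>y z. P y \<and> P z \<longrightarrow> dist (f y) (f z) < e)"
      by blast
  qed
  moreover have "filtermap f (at_left x) \<noteq> bot"
    by (simp add: filtermap_bot_iff trivial_limit_at_left_real)
  ultimately have "\<exists>l. filtermap f (at_left x) \<le> nhds l"
    by (intro cauchy_filter_complete_converges[OF _ complete_UNIV]) simp_all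
  then show "\<exists>l. (f \<longlongrightarrow> l) (at_left x)"
    by (auto simp: filterlim_def)
qed

lemma left_limit_iff_rat_left_Cauchy:
  "continuous_on {..<x} f \<Longrightarrow> (\<exists>l. (f \<longlongrightarrow> l) (at_left x)) \<longleftrightarrow> rat_left_Cauchy f x"
  using tendsto_at_left_imp_rat_left_Cauchy rat_left_Cauchy_imp_tendsto by blast

text \<open>Where no limit exists, \<open>Lim\<close> returns the junk value \<open>THE l. False\<close>.\<close>

lemma Lim_at_left_eq:
  assumes cont: "continuous_on {..<x} f"
  shows "Lim (at_left x) f = (if rat_left_Cauchy f x then lim (\<lambda>j. f (x - 1 / Suc j)) else (THE l. False))"
proof (cases "rat_left_Cauchy f x")
  case True
  then obtain l where l: "(f \<longlongrightarrow> l) (at_left x)"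
    using left_limit_iff_rat_left_Cauchy[OF cont] by blast
  have "(\<lambda>j. x - 1 / real (Suc j)) \<longlonglongrightarrow> x"
    using tendsto_diff[OF tendsto_const LIMSEQ_inverse_real_of_nat, of x] by (simp add: inverse_eq_divide)
  then have "filterlim (\<lambda>j. x - 1 / real (Suc j)) (at_left x) sequentially"
    by (intro tendsto_imp_filterlim_at_left) (auto intro: always_eventually)
  then have "(\<lambda>j. f (x - 1 / Suc j)) \<longlonglongrightarrow> l"
    by (rule filterlim_compose[OF l])
  then show ?thesis
    using True l by (simp add: limI tendsto_Lim)
next
  case False
  then have "(\<lambda>l. (f \<longlongrightarrow> l) (at_left x)) = (\<lambda>l. False)"
    using left_limit_iff_rat_left_Cauchy[OF cont] by auto
  then show ?thesis
    using False by (simp add: t2_space_class.Lim_def)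
qed

lemma borel_measurable_left_deriv:
  fixes G :: "real \<Rightarrow> real"
  assumes G: "continuous_on UNIV G"
  shows "left_deriv G \<in> borel_measurable borel"
proof -
  note [measurable] = borel_measurable_continuous_onI[OF G]
  have cont: "continuous_on {..<x} (\<lambda>y. (G x - G y) / (x - y))" for x
  proof -
    have "continuous_on {..<x} G" using G by (rule continuous_on_subset) simp
    then show ?thesis by (intro continuous_intros) auto
  qed
  have [measurable]: "Measurable.pred borel (\<lambda>x. rat_left_Cauchy (\<lambda>y. (G x - G y) / (x - y)) x)"
    unfolding rat_left_Cauchy_def by measurable
  have "(\<lambda>x. if rat_left_Cauchy (\<lambda>y. (G x - G y) / (x - y)) x
          then lim (\<lambda>j. (G x - G (x - 1 / Suc j)) / (x - (x - 1 / Suc j))) else (THE l. False))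
        \<in> borel_measurable borel"
    by measurable
  then show ?thesis
    unfolding left_deriv_def[abs_def] Lim_at_left_eq[OF cont] .
qed

lemma abs_cont_01_continuous_on:
  assumes "abs_cont_01 g"
  shows "continuous_on {0..1} g"
  unfolding continuous_on_iff
proof (intro ballI allI impI)
  fix x e :: real assume x: "x \<in> {0..1}" and e: "0 < e"
  obtain d where d: "0 < d" "\<And>(n::nat) (a::nat \<Rightarrow> real) b.
     (\<forall>i<n. 0 \<le> a i \<and> a i \<le> b i \<and> b i \<le> 1) \<and>
     (\<forall>i<n. \<forall>j<n. i \<noteq> j \<longrightarrow> b i \<le> a j \<or> b j \<le> a i) \<and>
     (\<Sum>i<n. b i - a i) < d \<Longrightarrow> (\<Sum>i<n. \<bar>g (b i) - g (a i)\<bar>) < e"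
    using assms e unfolding abs_cont_01_def by blast
  have "dist (g y) (g x) < e" if "y \<in> {0..1}" "dist y x < d" for y
  proof -
    have "max x y - min x y < d"
      using that by (auto simp: dist_real_def)
    then have "\<bar>g (max x y) - g (min x y)\<bar> < e"
      using d(2)[of 1 "\<lambda>_. min x y" "\<lambda>_. max x y"] x that by auto
    then show ?thesis
      by (cases "x \<le> y") (auto simp: dist_real_def max_def min_def abs_minus_commute)
  qed
  then show "\<exists>d>0. \<forall>y\<in>{0..1}. dist y x < d \<longrightarrow> dist (g y) (g x) < e"
    using d(1) by blast
qed

lemma weight_L2:
  assumes ac: "abs_cont_01 g" and sq: "set_integrable lborel {0<..<1} (\<lambda>u. (weight g u)\<^sup>2)"
  shows "L2 (weight g)"
proof -
  define G where "G y = g (max 0 (min 1 y))" for y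
  have "continuous_on UNIV G"
    unfolding G_def[abs_def]
    by (rule continuous_on_compose2[OF abs_cont_01_continuous_on[OF ac]]) (auto intro!: continuous_intros)
  then have "left_deriv G \<in> borel_measurable borel"
    by (rule borel_measurable_left_deriv)
  then have meas: "(\<lambda>u. left_deriv G (1 - u)) \<in> borel_measurable U01"
    by (intro borel_measurable_U01I measurable_compose[OF _ \<open>left_deriv G \<in> borel_measurable borel\<close>])
      simp
  have "weight g u = left_deriv G (1 - u)" if u: "u \<in> {0<..<1}" for u
  proof -
    have "eventually (\<lambda>y. y \<in> {0<..<1 - u}) (at_left (1 - u))"
      using u by (intro eventually_at_left_real) auto
    then have "eventually (\<lambda>y. (g (1 - u) - g y) / (1 - u - y) = (G (1 - u) - G y) / (1 - u - y))
        (at_left (1 - u))"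
      by (rule eventually_mono) (use u in \<open>auto simp: G_def\<close>)
    then show ?thesis
      unfolding weight_def left_deriv_def by (rule Lim_cong[OF _ refl])
  qed
  then have "weight g \<in> borel_measurable U01"
    using meas by (subst measurable_cong[where g="\<lambda>u. left_deriv G (1 - u)"]) auto
  then show ?thesis
    using sq by (simp add: L2_def set_integrable_U01)
qed

section \<open>The optimisation problem over \<open>Mq\<close>\<close>

lemma EU_eq: "EU f = integral\<^sup>L U01 f"
  unfolding EU_def by (rule set_lebesgue_integral_U01)

lemma stdU_eq: "stdU f = L2norm (\<lambda>u. f u - EU f)"
  unfolding stdU_def set_lebesgue_integral_U01 L2norm_def ip_self ..

lemma obj_eq: "obj w h = ip w h"
  unfolding obj_def set_lebesgue_integral_U01 ip_def ..

lemma stdU_pos: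
  assumes K: "in_K k" and nonconst: "\<not> (\<exists>c. \<forall>u\<in>{0<..<1}. k u = c)"
  shows "0 < stdU k"
proof -
  have L: "L2 (\<lambda>u. k u - EU k)" using in_KD(1)[OF K] by (intro L2_diff) auto
  have "stdU k \<noteq> 0"
  proof
    assume "stdU k = 0"
    then have "AE u in U01. k u - EU k = 0"
      using ip_self_eq_0_AE[OF L] by (simp add: stdU_eq L2norm_def)
    then have "AE u in U01. k u = EU k" by simp
    then have "\<forall>u\<in>{0<..<1}. k u = EU k"
      using in_K_AE_eq[OF K in_K_const] by blast
    then show False using nonconst by blast
  qed
  then show ?thesis by (simp add: stdU_eq L2norm_nonneg order_less_le)
qed

lemma Cauchy_Schwarz_eq_imp_AE_eq:
  assumes f: "L2 f" and g: "L2 g" and pos: "0 < L2norm f"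
    and eq: "ip f g = L2norm f * L2norm g"
  shows "AE u in U01. g u = (L2norm g / L2norm f) * f u"
proof -
  define c where "c = L2norm g / L2norm f"
  have "ip (\<lambda>u. g u - c * f u) (\<lambda>u. g u - c * f u) = ip g g - 2 * c * ip g f + c\<^sup>2 * ip f f"
    by (rule ip_diff_self[OF g f])
  also have "\<dots> = 0"
    using eq pos unfolding c_def L2norm_sq[symmetric] ip_commute[of g f]
    by (simp add: power2_eq_square field_simps)
  finally have "AE u in U01. g u - c * f u = 0"
    using ip_self_eq_0_AE L2_diff[OF g L2_scale[OF f]] by blast
  then show ?thesis by (simp add: c_def)
qed

definition standardize :: "real \<Rightarrow> real \<Rightarrow> (real \<Rightarrow> real) \<Rightarrow> real \<Rightarrow> real" where
  "standardize \<mu> \<sigma> k u = \<mu> + \<sigma> * (k u - EU k) / stdU k"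

lemma standardize_affine:
  "0 < stdU k \<Longrightarrow> standardize \<mu> \<sigma> k = (\<lambda>u. (\<sigma> / stdU k) * k u + (\<mu> - \<sigma> * EU k / stdU k))"
  by (auto simp: standardize_def field_simps)

lemma integral_standardize:
  assumes "L2 k" "0 < stdU k"
  shows "integral\<^sup>L U01 (standardize \<mu> \<sigma> k) = \<mu>"
  unfolding standardize_affine[OF assms(2)]
  using integral_U01_affine[OF assms(1), of "\<sigma> / stdU k" "\<mu> - \<sigma> * EU k / stdU k"]
  by (simp add: EU_eq)

lemma standardize_in_Mq:
  assumes K: "in_K k" and pos: "0 < stdU k" and \<sigma>: "0 \<le> \<sigma>"
  shows "standardize \<mu> \<sigma> k \<in> Mq \<mu> \<sigma>"
  unfolding Mq_iff
proof (intro conjI)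
  have L: "L2 k" using K by (rule in_KD)
  show "in_K (standardize \<mu> \<sigma> k)"
    unfolding standardize_affine[OF pos] using \<sigma> pos by (intro in_K_affine K) simp
  show "integral\<^sup>L U01 (standardize \<mu> \<sigma> k) = \<mu>"
    using L pos by (rule integral_standardize)
  have "integral\<^sup>L U01 (\<lambda>u. (standardize \<mu> \<sigma> k u - \<mu>)\<^sup>2) = (L2norm (\<lambda>u. (\<sigma> / stdU k) * (k u - EU k)))\<^sup>2"
    unfolding L2norm_sq ip_self by (simp add: standardize_def)
  also have "\<dots> = \<sigma>\<^sup>2"
    unfolding L2norm_scale stdU_eq[symmetric] using \<sigma> pos by (simp add: power_mult_distrib power_divide)
  finally show "integral\<^sup>L U01 (\<lambda>u. (standardize \<mu> \<sigma> k u - \<mu>)\<^sup>2) = \<sigma>\<^sup>2" .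
qed

lemma Mq_centered_norm:
  assumes h: "h \<in> Mq \<mu> \<sigma>" and \<sigma>: "0 \<le> \<sigma>"
  shows "in_K h" "L2 h" "integral\<^sup>L U01 h = \<mu>" "L2norm (\<lambda>u. h u - \<mu>) = \<sigma>"
proof -
  show K: "in_K h" and "integral\<^sup>L U01 h = \<mu>"
    using h by (simp_all add: Mq_iff)
  show "L2 h" using K by (rule in_KD)
  have "ip (\<lambda>u. h u - \<mu>) (\<lambda>u. h u - \<mu>) = \<sigma>\<^sup>2"
    using h by (simp add: Mq_iff ip_self)
  then show "L2norm (\<lambda>u. h u - \<mu>) = \<sigma>"
    using \<sigma> by (simp add: L2norm_def)
qed

context
  fixes w k :: "real \<Rightarrow> real"
  assumes w: "L2 w" and k: "is_proj w k"
begin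

lemma is_proj_L2: "L2 k"
  using is_proj_in_K[OF k] by (rule in_KD)

text \<open>For \<open>h\<close> with mean \<open>\<mu>\<close> the objective splits into a term that is non-positive on \<open>K\<close> and
  vanishes at \<open>h = k\<close>, and a covariance with \<open>k\<close> controlled by Cauchy--Schwarz.\<close>

lemma obj_proj_decomp:
  assumes h: "L2 h" "integral\<^sup>L U01 h = \<mu>"
  shows "obj w h = ip (\<lambda>u. w u - k u) h + ip (\<lambda>u. k u - EU k) (\<lambda>u. h u - \<mu>) + EU k * \<mu>"
proof -
  have "obj w h = ip (\<lambda>u. (w u - k u) + k u) h"
    by (simp add: obj_eq)
  also have "\<dots> = ip (\<lambda>u. w u - k u) h + ip k h"
    using w is_proj_L2 h(1) by (intro ip_add_left L2_diff)
  finally show ?thesis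
    using ip_shift[OF is_proj_L2 h(1), of "EU k" \<mu>] h(2) by (simp add: EU_eq)
qed

lemma obj_standardize_proj:
  assumes pos: "0 < stdU k"
  shows "obj w (standardize \<mu> \<sigma> k) = EU k * \<mu> + \<sigma> * stdU k"
proof -
  note std = standardize_affine[OF pos, of \<mu> \<sigma>]
  have Ls: "L2 (standardize \<mu> \<sigma> k)"
    unfolding std using is_proj_L2 by (rule L2_affine)
  have "ip (\<lambda>u. w u - k u) (standardize \<mu> \<sigma> k) = 0"
    unfolding std using is_proj_ip_self[OF w k] is_proj_integral[OF w k]
      ip_affine_right[OF is_proj_L2 L2_diff[OF w is_proj_L2], of "\<sigma> / stdU k" "\<mu> - \<sigma> * EU k / stdU k"]
    by simp
  moreover have "ip (\<lambda>u. k u - EU k) (\<lambda>u. standardize \<mu> \<sigma> k u - \<mu>)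
      = (\<sigma> / stdU k) * (L2norm (\<lambda>u. k u - EU k))\<^sup>2"
    unfolding L2norm_sq by (simp add: standardize_def ip_scale_right[symmetric] mult_ac)
  moreover have "integral\<^sup>L U01 (standardize \<mu> \<sigma> k) = \<mu>"
    using is_proj_L2 pos by (rule integral_standardize)
  ultimately show ?thesis
    using obj_proj_decomp[OF Ls] pos by (simp add: stdU_eq[symmetric] power2_eq_square)
qed

lemma obj_le_standardize_proj:
  assumes pos: "0 < stdU k" and \<sigma>: "0 \<le> \<sigma>" and h: "h \<in> Mq \<mu> \<sigma>"
  shows "obj w h \<le> obj w (standardize \<mu> \<sigma> k)"
proof -
  note h' = Mq_centered_norm[OF h \<sigma>]
  have "ip (\<lambda>u. w u - k u) h \<le> 0"
    using h'(1) by (rule is_proj_ip_nonpos[OF w k])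
  moreover have "ip (\<lambda>u. k u - EU k) (\<lambda>u. h u - \<mu>) \<le> stdU k * \<sigma>"
    using abs_le_D1[OF ip_Cauchy_Schwarz[OF L2_diff[OF is_proj_L2 L2_const[of "EU k"]]
        L2_diff[OF h'(2) L2_const[of \<mu>]]]] h'(4)
    by (simp add: stdU_eq)
  ultimately show ?thesis
    using obj_proj_decomp[OF h'(2,3)] obj_standardize_proj[OF pos] by (simp add: mult.commute)
qed

lemma obj_eq_standardize_proj_imp_eq:
  assumes pos: "0 < stdU k" and \<sigma>: "0 \<le> \<sigma>" and h: "h \<in> Mq \<mu> \<sigma>"
    and eq: "obj w h = obj w (standardize \<mu> \<sigma> k)"
  shows "\<forall>u\<in>{0<..<1}. h u = standardize \<mu> \<sigma> k u"
proof -
  note h' = Mq_centered_norm[OF h \<sigma>]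
  let ?kc = "\<lambda>u. k u - EU k" and ?hc = "\<lambda>u. h u - \<mu>"
  have Lkc: "L2 ?kc" and Lhc: "L2 ?hc"
    using is_proj_L2 h'(2) by (auto intro: L2_diff)
  have "ip (\<lambda>u. w u - k u) h \<le> 0"
    using h'(1) by (rule is_proj_ip_nonpos[OF w k])
  moreover have "ip ?kc ?hc \<le> stdU k * \<sigma>"
    using ip_Cauchy_Schwarz[OF Lkc Lhc] h'(4) by (simp add: stdU_eq)
  ultimately have "ip ?kc ?hc = L2norm ?kc * L2norm ?hc"
    using eq obj_proj_decomp[OF h'(2,3)] obj_standardize_proj[OF pos] h'(4)
    by (simp add: stdU_eq mult.commute)
  then have "AE u in U01. h u - \<mu> = (\<sigma> / stdU k) * (k u - EU k)"
    using Cauchy_Schwarz_eq_imp_AE_eq[OF Lkc Lhc] pos h'(4) by (simp add: stdU_eq)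
  then have "AE u in U01. h u = standardize \<mu> \<sigma> k u"
    by (auto simp: standardize_def)
  moreover have "in_K (standardize \<mu> \<sigma> k)"
    using standardize_in_Mq[OF is_proj_in_K[OF k] pos \<sigma>] by (simp add: Mq_iff)
  ultimately show ?thesis
    using in_K_AE_eq[OF h'(1)] by blast
qed

end

section \<open>Dependence on \<open>\<lambda>\<close>\<close>

lemma is_proj_const_of_obtuse:
  assumes w: "L2 w" and k: "is_proj w k"
    and obtuse: "\<And>f. in_K f \<Longrightarrow> ip (\<lambda>u. w u - integral\<^sup>L U01 w) f \<le> 0"
  shows "\<forall>u\<in>{0<..<1}. k u = integral\<^sup>L U01 w"
proof -
  define c where "c = integral\<^sup>L U01 w"
  let ?a = "\<lambda>u. w u - c" and ?e = "\<lambda>u. k u - c"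
  have K: "in_K k" using k by (rule is_proj_in_K)
  have Lk: "L2 k" using K by (rule in_KD)
  have La: "L2 ?a" and Le: "L2 ?e" using w Lk by (auto intro: L2_diff)
  have "ip ?a ?e = ip ?a k - c * integral\<^sup>L U01 ?a"
    using ip_diff_right[OF Lk L2_const La] by (simp add: ip_const_right)
  also have "integral\<^sup>L U01 ?a = 0"
    using integral_U01_diff[OF w L2_const] by (simp add: c_def)
  finally have "ip ?a ?e \<le> 0"
    using obtuse[OF K] by (simp add: c_def)
  moreover have "ip (\<lambda>u. w u - k u) (\<lambda>u. w u - k u) = ip ?a ?a - 2 * ip ?a ?e + ip ?e ?e"
  proof -
    have "ip (\<lambda>u. w u - k u) (\<lambda>u. w u - k u) = ip (\<lambda>u. ?a u - 1 * ?e u) (\<lambda>u. ?a u - 1 * ?e u)"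
      by (rule ip_cong) simp_all
    also have "\<dots> = ip ?a ?a - 2 * 1 * ip ?a ?e + 1\<^sup>2 * ip ?e ?e"
      by (rule ip_diff_self[OF La Le])
    finally show ?thesis by simp
  qed
  moreover have "ip (\<lambda>u. w u - k u) (\<lambda>u. w u - k u) \<le> ip ?a ?a"
    using is_proj_le[OF k in_K_const] .
  ultimately have "ip ?e ?e = 0"
    using ip_self_nonneg[of ?e] by linarith
  then have "AE u in U01. k u = c"
    using ip_self_eq_0_AE[OF Le] by simp
  then show ?thesis
    using in_K_AE_eq[OF K in_K_const] unfolding c_def by blast
qed

lemma is_proj_const_downward:
  assumes \<gamma>: "L2 \<gamma>" and Q: "L2 Q" "mono_on {0<..<1} Q" and l: "l0 < l"
    and k: "is_proj (\<lambda>u. \<gamma> u + l * Q u) k" and const: "\<forall>u\<in>{0<..<1}. k u = c"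
    and k0: "is_proj (\<lambda>u. \<gamma> u + l0 * Q u) k0"
  shows "\<exists>c0. \<forall>u\<in>{0<..<1}. k0 u = c0"
proof -
  have integral_W: "integral\<^sup>L U01 (\<lambda>u. \<gamma> u + t * Q u) = integral\<^sup>L U01 \<gamma> + t * integral\<^sup>L U01 Q" for t
    using \<gamma> Q(1) by (subst Bochner_Integration.integral_add) (auto intro: L2_integrable L2_scale)
  have LW: "L2 (\<lambda>u. \<gamma> u + t * Q u)" for t
    using \<gamma> Q(1) by (intro L2_add L2_scale)
  have "integral\<^sup>L U01 k = integral\<^sup>L U01 (\<lambda>u. c)"
    by (rule Bochner_Integration.integral_cong) (simp_all add: const)
  then have c: "c = integral\<^sup>L U01 \<gamma> + l * integral\<^sup>L U01 Q"
    using is_proj_integral[OF LW k] integral_U01_diff[OF LW is_proj_L2[OF LW k]] integral_W[of l]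
    by simp
  show ?thesis
  proof (rule exI, rule is_proj_const_of_obtuse[OF LW k0])
    fix f assume f: "in_K f"
    have Lf: "L2 f" using f by (rule in_KD)
    let ?Qc = "\<lambda>u. Q u - integral\<^sup>L U01 Q" and ?r = "\<lambda>u. \<gamma> u + l * Q u - k u"
    have "\<gamma> u + l0 * Q u - integral\<^sup>L U01 (\<lambda>u. \<gamma> u + l0 * Q u) = ?r u - (l - l0) * ?Qc u"
      if "u \<in> {0<..<1}" for u
      using const that unfolding integral_W by (simp add: c algebra_simps)
    then have "ip (\<lambda>u. \<gamma> u + l0 * Q u - integral\<^sup>L U01 (\<lambda>u. \<gamma> u + l0 * Q u)) f
        = ip (\<lambda>u. ?r u - (l - l0) * ?Qc u) f"
      by (intro ip_cong) simp_all
    also have "\<dots> = ip ?r f - (l - l0) * ip ?Qc f"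
      using ip_diff_left[OF L2_diff[OF LW is_proj_L2[OF LW k]] L2_scale[OF L2_diff[OF Q(1) L2_const]] Lf]
      by (simp add: ip_scale_left)
    also have "\<dots> \<le> 0"
    proof -
      have "0 \<le> (l - l0) * ip ?Qc f"
        using ip_centered_mono_nonneg[OF Q f] l by simp
      then show ?thesis using is_proj_ip_nonpos[OF LW k f] by linarith
    qed
    finally show "ip (\<lambda>u. \<gamma> u + l0 * Q u - integral\<^sup>L U01 (\<lambda>u. \<gamma> u + l0 * Q u)) f \<le> 0" .
  qed
qed

lemma is_proj_lipschitz:
  assumes \<gamma>: "L2 \<gamma>" and Q: "L2 Q" and K: "\<And>l. is_proj (\<lambda>u. \<gamma> u + l * Q u) (K l)"
  shows "L2norm (\<lambda>u. K l u - K m u) \<le> \<bar>l - m\<bar> * L2norm Q"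
proof -
  have LW: "L2 (\<lambda>u. \<gamma> u + t * Q u)" for t
    using \<gamma> Q by (intro L2_add L2_scale)
  have "L2norm (\<lambda>u. K l u - K m u) \<le> L2norm (\<lambda>u. (\<gamma> u + l * Q u) - (\<gamma> u + m * Q u))"
    by (rule is_proj_nonexpansive[OF LW LW K K])
  also have "\<dots> = L2norm (\<lambda>u. (l - m) * Q u)"
    by (rule L2norm_cong) (simp add: algebra_simps)
  also have "\<dots> = \<bar>l - m\<bar> * L2norm Q"
    by (rule L2norm_scale)
  finally show ?thesis .
qed

lemma EU_lipschitz:
  assumes "L2 f" "L2 g"
  shows "\<bar>EU f - EU g\<bar> \<le> L2norm (\<lambda>u. f u - g u)"
proof -
  have "EU f - EU g = ip (\<lambda>u. 1) (\<lambda>u. f u - g u)"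
    using assms by (simp add: EU_eq ip_const_left integral_U01_diff)
  moreover have "L2norm (\<lambda>u. 1) = 1"
    by (simp add: L2norm_def ip_const_left)
  ultimately show ?thesis
    using ip_Cauchy_Schwarz[OF L2_const[of 1] L2_diff[OF assms]] by simp
qed

lemma L2norm_centered_le:
  assumes "L2 f"
  shows "L2norm (\<lambda>u. f u - EU f) \<le> L2norm f"
proof -
  have "(L2norm (\<lambda>u. f u - EU f))\<^sup>2 \<le> (L2norm f)\<^sup>2"
    unfolding L2norm_sq using ip_shift[OF assms assms, of "EU f" "EU f"] by (simp add: EU_eq)
  then show ?thesis
    using L2norm_nonneg[of f] by (rule power2_le_imp_le)
qed

lemma stdU_lipschitz:
  assumes f: "L2 f" and g: "L2 g"
  shows "\<bar>stdU f - stdU g\<bar> \<le> L2norm (\<lambda>u. f u - g u)"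
proof -
  have le: "stdU f \<le> stdU g + L2norm (\<lambda>u. f u - g u)" if f: "L2 f" and g: "L2 g" for f g
  proof -
    let ?d = "\<lambda>u. f u - g u"
    have "EU ?d = EU f - EU g" using f g by (simp add: EU_eq integral_U01_diff)
    then have "stdU f = L2norm (\<lambda>u. (g u - EU g) + (?d u - EU ?d))"
      unfolding stdU_eq by (intro L2norm_cong) simp
    also have "\<dots> \<le> stdU g + L2norm (\<lambda>u. ?d u - EU ?d)"
      unfolding stdU_eq by (rule L2norm_triangle[OF L2_diff[OF g L2_const] L2_diff[OF L2_diff[OF f g] L2_const]])
    also have "L2norm (\<lambda>u. ?d u - EU ?d) \<le> L2norm ?d"
      using f g by (intro L2norm_centered_le L2_diff)
    finally show ?thesis by simp
  qed
  have "L2norm (\<lambda>u. g u - f u) = L2norm (\<lambda>u. f u - g u)"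
    using L2norm_scale[of "-1" "\<lambda>u. f u - g u"] by simp
  then show ?thesis
    using le[OF f g] le[OF g f] by linarith
qed

lemma corrU_affine_right:
  assumes Q: "L2 Q" and k: "L2 k" and a: "0 < a"
  shows "corrU Q (\<lambda>u. a * k u + b) = corrU Q k"
proof -
  have E: "EU (\<lambda>u. a * k u + b) = a * EU k + b"
    using k by (simp add: EU_eq integral_U01_affine)
  have "stdU (\<lambda>u. a * k u + b) = L2norm (\<lambda>u. a * (k u - EU k))"
    unfolding stdU_eq E by (rule L2norm_cong) (simp add: algebra_simps)
  then have S: "stdU (\<lambda>u. a * k u + b) = a * stdU k"
    using a by (simp add: L2norm_scale stdU_eq)
  have "EU (\<lambda>u. Q u * (a * k u + b)) = a * EU (\<lambda>u. Q u * k u) + b * EU Q"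
    using ip_affine_right[OF k Q, of a b] by (simp add: EU_eq ip_def)
  then have "corrU Q (\<lambda>u. a * k u + b)
      = (a * (EU (\<lambda>u. Q u * k u) - EU Q * EU k)) / (a * (stdU Q * stdU k))"
    unfolding corrU_def E S by (simp add: algebra_simps)
  then show ?thesis
    using a by (simp add: corrU_def)
qed

lemma corrU_standardize:
  assumes "L2 Q" "L2 k" "0 < stdU k" "0 < \<sigma>"
  shows "corrU Q (standardize \<mu> \<sigma> k) = corrU Q k"
  unfolding standardize_affine[OF assms(3)] using assms by (intro corrU_affine_right) simp_all

lemma continuous_on_Lipschitz_bound:
  fixes F :: "real \<Rightarrow> real"
  assumes "\<And>x y. \<bar>F x - F y\<bar> \<le> C * \<bar>x - y\<bar>"
  shows "continuous_on S F"
proof (rule lipschitz_on_continuous_on)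
  show "lipschitz_on \<bar>C\<bar> S F"
  proof (rule lipschitz_onI)
    fix x y
    have "C * \<bar>x - y\<bar> \<le> \<bar>C\<bar> * \<bar>x - y\<bar>" by (intro mult_right_mono) auto
    then show "dist (F x) (F y) \<le> \<bar>C\<bar> * dist x y"
      using assms[of x y] by (simp add: dist_real_def)
  qed simp
qed

lemma continuous_on_corrU_proj:
  assumes \<gamma>: "L2 \<gamma>" and Q: "L2 Q" and K: "\<And>l. is_proj (\<lambda>u. \<gamma> u + l * Q u) (K l)"
    and pos: "\<And>l. 0 < l \<Longrightarrow> 0 < stdU (K l)"
  shows "continuous_on {0<..} (\<lambda>l. corrU Q (K l))"
proof -
  have LK: "L2 (K l)" for l
    by (rule is_proj_L2[OF L2_add[OF \<gamma> L2_scale[OF Q]] K])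
  note lip = is_proj_lipschitz[OF \<gamma> Q K]
  have "continuous_on {0<..} (\<lambda>l. ip Q (K l))"
  proof (rule continuous_on_Lipschitz_bound)
    fix l m
    have "\<bar>ip Q (K l) - ip Q (K m)\<bar> \<le> L2norm Q * L2norm (\<lambda>u. K l u - K m u)"
      using ip_Cauchy_Schwarz[OF Q L2_diff[OF LK LK]] ip_diff_right[OF LK LK Q] by simp
    also have "\<dots> \<le> L2norm Q * (\<bar>l - m\<bar> * L2norm Q)"
      using lip L2norm_nonneg by (rule mult_left_mono)
    finally show "\<bar>ip Q (K l) - ip Q (K m)\<bar> \<le> (L2norm Q * L2norm Q) * \<bar>l - m\<bar>"
      by (simp add: mult_ac)
  qed
  moreover have "continuous_on {0<..} (\<lambda>l. EU (K l))"
    using order_trans[OF EU_lipschitz[OF LK LK] lip]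
    by (intro continuous_on_Lipschitz_bound[where C="L2norm Q"]) (simp add: mult.commute)
  moreover have "continuous_on {0<..} (\<lambda>l. stdU (K l))"
    using order_trans[OF stdU_lipschitz[OF LK LK] lip]
    by (intro continuous_on_Lipschitz_bound[where C="L2norm Q"]) (simp add: mult.commute)
  ultimately have "continuous_on {0<..} (\<lambda>l. (ip Q (K l) - EU Q * EU (K l)) / (stdU Q * stdU (K l)))"
    using pos[THEN less_imp_neq] by (cases "stdU Q = 0") (auto intro!: continuous_intros)
  moreover have "corrU Q (K l) = (ip Q (K l) - EU Q * EU (K l)) / (stdU Q * stdU (K l))" for l
    by (simp add: corrU_def EU_eq ip_def)
  ultimately show ?thesis by simp
qed

lemma is_proj_nonconst:
  assumes \<gamma>: "L2 \<gamma>" and Q: "L2 Q" "mono_on {0<..<1} Q"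
    and K: "\<And>l. is_proj (\<lambda>u. \<gamma> u + l * Q u) (K l)"
    and ne: "{l. l \<ge> 0 \<and> \<not> (\<exists>c. \<forall>u\<in>{0<..<1}. K l u = c)} \<noteq> {}"
    and inf: "Inf {l. l \<ge> 0 \<and> \<not> (\<exists>c. \<forall>u\<in>{0<..<1}. K l u = c)} = 0"
    and l: "0 < l"
  shows "\<not> (\<exists>c. \<forall>u\<in>{0<..<1}. K l u = c)"
proof
  assume "\<exists>c. \<forall>u\<in>{0<..<1}. K l u = c"
  then obtain c where c: "\<forall>u\<in>{0<..<1}. K l u = c" ..
  obtain l0 where "l0 < l" "\<not> (\<exists>c. \<forall>u\<in>{0<..<1}. K l0 u = c)"
    using cInf_lessD[OF ne, of l] inf l by auto
  then show False
    using is_proj_const_downward[OF \<gamma> Q \<open>l0 < l\<close> K c K] by blast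
qed

theorem lemmaB4:
  fixes g :: "real \<Rightarrow> real" and M :: "real measure" and \<mu> \<sigma> lam :: real
  assumes "distortion g" and "abs_cont_01 g"
    and "set_integrable lborel {0<..<1} (\<lambda>u. (weight g u)\<^sup>2)"
    and "real_distribution M" and "integrable M (\<lambda>x. x\<^sup>2)"
    and "\<sigma> > 0"
    and "{l. l \<ge> 0 \<and> \<not> (\<exists>c. \<forall>u\<in>{0<..<1}. kup (weight g) (quantile (cdf M)) l u = c)} \<noteq> {}"
    and "Inf {l. l \<ge> 0 \<and> \<not> (\<exists>c. \<forall>u\<in>{0<..<1}. kup (weight g) (quantile (cdf M)) l u = c)} = 0"
    and "lam > 0"
  shows "let \<gamma> = weight g; Q = quantile (cdf M);
             hup = (\<lambda>l u. \<mu> + \<sigma> * (kup \<gamma> Q l u - EU (kup \<gamma> Q l)) / stdU (kup \<gamma> Q l));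
             w = (\<lambda>u. \<gamma> u + lam * Q u)
         in stdU (kup \<gamma> Q lam) > 0
          \<and> hup lam \<in> Mq \<mu> \<sigma>
          \<and> (\<forall>h\<in>Mq \<mu> \<sigma>. obj w h \<le> obj w (hup lam))
          \<and> (\<forall>h\<in>Mq \<mu> \<sigma>. obj w h = obj w (hup lam) \<longrightarrow> (\<forall>u\<in>{0<..<1}. h u = hup lam u))
          \<and> continuous_on {0<..} (\<lambda>l. corrU Q (hup l))"
proof -
  define \<gamma> where "\<gamma> = weight g"
  define Q where "Q = quantile (cdf M)"
  define K where "K l = kup \<gamma> Q l" for l
  have L\<gamma>: "L2 \<gamma>" unfolding \<gamma>_def by (rule weight_L2[OF assms(2,3)])
  have KQ: "in_K Q" unfolding Q_def by (rule quantile_in_K[OF assms(4,5)])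
  note LQ = in_KD(1)[OF KQ] and monoQ = in_KD(2)[OF KQ]
  have LW: "L2 (\<lambda>u. \<gamma> u + l * Q u)" for l
    using L\<gamma> LQ by (intro L2_add L2_scale)
  have proj: "is_proj (\<lambda>u. \<gamma> u + l * Q u) (K l)" for l
    unfolding K_def by (rule kup_is_proj[OF is_proj_exists[OF LW]])
  have pos: "0 < stdU (K l)" if "0 < l" for l
    using is_proj_nonconst[OF L\<gamma> LQ monoQ proj _ _ that] assms(7,8)
    by (intro stdU_pos[OF is_proj_in_K[OF proj]]) (simp add: K_def \<gamma>_def Q_def)
  have "continuous_on {0<..} (\<lambda>l. corrU Q (standardize \<mu> \<sigma> (K l)))
      = continuous_on {0<..} (\<lambda>l. corrU Q (K l))"
    using corrU_standardize[OF LQ is_proj_L2[OF LW proj] pos assms(6)]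
    by (intro continuous_on_cong) simp_all
  then have corr: "continuous_on {0<..} (\<lambda>l. corrU Q (standardize \<mu> \<sigma> (K l)))"
    using continuous_on_corrU_proj[OF L\<gamma> LQ proj pos] by simp
  note optimal = standardize_in_Mq[OF is_proj_in_K[OF proj] pos[OF assms(9)]]
    obj_le_standardize_proj[OF LW proj pos[OF assms(9)]]
    obj_eq_standardize_proj_imp_eq[OF LW proj pos[OF assms(9)]]
  show ?thesis
    unfolding Let_def \<gamma>_def[symmetric] Q_def[symmetric] K_def[symmetric] standardize_def[symmetric]
    using pos[OF assms(9)] optimal corr assms(6) by auto
qed

end
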